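(* (1) Let $\mathcal X\subseteq\mathcal C$ be a covariantly finite subcategory closed under extensions and direct summands, and put $\mathcal Y={}^{\perp_1}\mathcal X$. Then for every $C\in\mathcal C$ there is an $\mathbb E$-triangle $X\xrightarrow{x}Y\xrightarrow{y}C\overset{\delta}{\dashrightarrow}$ with $X\in\mathcal X$, $Y\in\mathcal Y$, and $y:Y\to C$ a right $\mathcal Y$-approximation of $C$. (2) Let $\mathcal Y\subseteq\mathcal C$ be a contravariantly finite subcategory closed under extensions and direct summands, and put $\mathcal X=\mathcal Y^{\perp_1}$. Then for every $C\in\mathcal C$ there is an $\mathbb E$-triangle $C\xrightarrow{x}X\xrightarrow{y}Y\overset{\delta}{\dashrightarrow}$ with $X\in\mathcal X$, $Y\in\mathcal Y$, and $x:C\to X$ a left $\mathcal X$-approximation of $C$.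
   Context: $(\mathcal C,\mathbb E,\mathfrak s)$ is an extriangulated category in the sense of Nakaoka–Palu, whose underlying additive category is Krull–Schmidt, and which has enough projectives and enough injectives (projective $P$: $\mathbb E(P,-)=0$; injective $I$: $\mathbb E(-,I)=0$). All subcategories are full additive subcategories closed under isomorphisms. A subcategory is closed under extensions if for every $\mathbb E$-triangle $A\to B\to C\dashrightarrow$ with $A,C$ in it, $B$ is in it. For a subcategory $\mathcal X$, ${}^{\perp_1}\mathcal X=\{Y\in\mathcal C:\mathbb E(Y,X)=0\ \forall X\in\mathcal X\}$ and $\mathcal X^{\perp_1}=\{Y\in\mathcal C:\mathbb E(X,Y)=0\ \forall X\in\mathcal X\}$. *)

theory Defs
  imports Main
begin

(* Data of an extriangulated category (Nakaoka--Palu), encoded with explicit carriers.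
   Ob: objects; Hom A B: morphisms A -> B; cmp g f = g o f; idm A: identity;
   madd/mzero/mneg: abelian group structure on each Hom A B;
   Ext C A = E(C,A); eadd/ezero/eneg: abelian group structure on each E(C,A);
   push a d = a_* d  (a : A -> A', d in E(C,A));  pull c d = c^* d  (c : C' -> C, d in E(C,A));
   etri A B C x y d : "A -x-> B -y-> C -d->" is an E-triangle, i.e. s(d) = [A -x-> B -y-> C]. *)
record ('o, 'm, 'e) extri =
  Ob :: "'o set"
  Hom :: "'o \<Rightarrow> 'o \<Rightarrow> 'm set"
  cmp :: "'m \<Rightarrow> 'm \<Rightarrow> 'm"
  idm :: "'o \<Rightarrow> 'm"
  madd :: "'m \<Rightarrow> 'm \<Rightarrow> 'm"
  mzero :: "'o \<Rightarrow> 'o \<Rightarrow> 'm"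
  mneg :: "'m \<Rightarrow> 'm"
  Ext :: "'o \<Rightarrow> 'o \<Rightarrow> 'e set"
  eadd :: "'e \<Rightarrow> 'e \<Rightarrow> 'e"
  ezero :: "'o \<Rightarrow> 'o \<Rightarrow> 'e"
  eneg :: "'e \<Rightarrow> 'e"
  push :: "'m \<Rightarrow> 'e \<Rightarrow> 'e"
  pull :: "'m \<Rightarrow> 'e \<Rightarrow> 'e"
  etri :: "'o \<Rightarrow> 'o \<Rightarrow> 'o \<Rightarrow> 'm \<Rightarrow> 'm \<Rightarrow> 'e \<Rightarrow> bool"

definition ab_grp :: "'a set \<Rightarrow> ('a \<Rightarrow> 'a \<Rightarrow> 'a) \<Rightarrow> 'a \<Rightarrow> ('a \<Rightarrow> 'a) \<Rightarrow> bool" where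
  "ab_grp S p z n \<longleftrightarrow> z \<in> S \<and> (\<forall>x\<in>S. \<forall>y\<in>S. p x y \<in> S)
     \<and> (\<forall>x\<in>S. \<forall>y\<in>S. \<forall>w\<in>S. p (p x y) w = p x (p y w))
     \<and> (\<forall>x\<in>S. \<forall>y\<in>S. p x y = p y x)
     \<and> (\<forall>x\<in>S. p z x = x)
     \<and> (\<forall>x\<in>S. n x \<in> S \<and> p (n x) x = z)"

definition preadditive :: "('o, 'm, 'e) extri \<Rightarrow> bool" where
  "preadditive K \<longleftrightarrow>
     (\<forall>A\<in>Ob K. \<forall>B\<in>Ob K. \<forall>C\<in>Ob K. \<forall>f\<in>Hom K A B. \<forall>g\<in>Hom K B C. cmp K g f \<in> Hom K A C)
   \<and> (\<forall>A\<in>Ob K. idm K A \<in> Hom K A A)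
   \<and> (\<forall>A\<in>Ob K. \<forall>B\<in>Ob K. \<forall>f\<in>Hom K A B. cmp K f (idm K A) = f \<and> cmp K (idm K B) f = f)
   \<and> (\<forall>A\<in>Ob K. \<forall>B\<in>Ob K. \<forall>C\<in>Ob K. \<forall>D\<in>Ob K. \<forall>f\<in>Hom K A B. \<forall>g\<in>Hom K B C. \<forall>h\<in>Hom K C D.
        cmp K h (cmp K g f) = cmp K (cmp K h g) f)
   \<and> (\<forall>A\<in>Ob K. \<forall>B\<in>Ob K. ab_grp (Hom K A B) (madd K) (mzero K A B) (mneg K))
   \<and> (\<forall>A\<in>Ob K. \<forall>B\<in>Ob K. \<forall>C\<in>Ob K. \<forall>f\<in>Hom K A B. \<forall>f'\<in>Hom K A B. \<forall>g\<in>Hom K B C.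
        cmp K g (madd K f f') = madd K (cmp K g f) (cmp K g f'))
   \<and> (\<forall>A\<in>Ob K. \<forall>B\<in>Ob K. \<forall>C\<in>Ob K. \<forall>f\<in>Hom K A B. \<forall>g\<in>Hom K B C. \<forall>g'\<in>Hom K B C.
        cmp K (madd K g g') f = madd K (cmp K g f) (cmp K g' f))"

definition is_zero_obj :: "('o, 'm, 'e) extri \<Rightarrow> 'o \<Rightarrow> bool" where
  "is_zero_obj K Z \<longleftrightarrow> Z \<in> Ob K \<and>
     (\<forall>A\<in>Ob K. Hom K Z A = {mzero K Z A} \<and> Hom K A Z = {mzero K A Z})"

definition is_biprod :: "('o, 'm, 'e) extri \<Rightarrow> 'o \<Rightarrow> 'o \<Rightarrow> 'o \<Rightarrow> 'm \<Rightarrow> 'm \<Rightarrow> 'm \<Rightarrow> 'm \<Rightarrow> bool" where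
  "is_biprod K A B S i1 i2 p1 p2 \<longleftrightarrow> A \<in> Ob K \<and> B \<in> Ob K \<and> S \<in> Ob K
     \<and> i1 \<in> Hom K A S \<and> i2 \<in> Hom K B S \<and> p1 \<in> Hom K S A \<and> p2 \<in> Hom K S B
     \<and> cmp K p1 i1 = idm K A \<and> cmp K p2 i2 = idm K B
     \<and> cmp K p2 i1 = mzero K A B \<and> cmp K p1 i2 = mzero K B A
     \<and> madd K (cmp K i1 p1) (cmp K i2 p2) = idm K S"

definition additive :: "('o, 'm, 'e) extri \<Rightarrow> bool" where
  "additive K \<longleftrightarrow> preadditive K \<and> (\<exists>Z. is_zero_obj K Z)
     \<and> (\<forall>A\<in>Ob K. \<forall>B\<in>Ob K. \<exists>S i1 i2 p1 p2. is_biprod K A B S i1 i2 p1 p2)"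

definition iso :: "('o, 'm, 'e) extri \<Rightarrow> 'o \<Rightarrow> 'o \<Rightarrow> 'm \<Rightarrow> bool" where
  "iso K A B f \<longleftrightarrow> A \<in> Ob K \<and> B \<in> Ob K \<and> f \<in> Hom K A B \<and>
     (\<exists>g\<in>Hom K B A. cmp K g f = idm K A \<and> cmp K f g = idm K B)"

definition biadditive_E :: "('o, 'm, 'e) extri \<Rightarrow> bool" where
  "biadditive_E K \<longleftrightarrow>
     (\<forall>C\<in>Ob K. \<forall>A\<in>Ob K. ab_grp (Ext K C A) (eadd K) (ezero K C A) (eneg K))
   \<and> (\<forall>C\<in>Ob K. \<forall>A\<in>Ob K. \<forall>A'\<in>Ob K. \<forall>a\<in>Hom K A A'. \<forall>d\<in>Ext K C A. push K a d \<in> Ext K C A')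
   \<and> (\<forall>C\<in>Ob K. \<forall>C'\<in>Ob K. \<forall>A\<in>Ob K. \<forall>c\<in>Hom K C' C. \<forall>d\<in>Ext K C A. pull K c d \<in> Ext K C' A)
   \<and> (\<forall>C\<in>Ob K. \<forall>A\<in>Ob K. \<forall>d\<in>Ext K C A. push K (idm K A) d = d \<and> pull K (idm K C) d = d)
   \<and> (\<forall>C\<in>Ob K. \<forall>A\<in>Ob K. \<forall>A'\<in>Ob K. \<forall>A''\<in>Ob K. \<forall>a\<in>Hom K A A'. \<forall>a'\<in>Hom K A' A''. \<forall>d\<in>Ext K C A.
        push K (cmp K a' a) d = push K a' (push K a d))
   \<and> (\<forall>C\<in>Ob K. \<forall>C'\<in>Ob K. \<forall>C''\<in>Ob K. \<forall>A\<in>Ob K. \<forall>c\<in>Hom K C' C. \<forall>c'\<in>Hom K C'' C'. \<forall>d\<in>Ext K C A.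
        pull K (cmp K c c') d = pull K c' (pull K c d))
   \<and> (\<forall>C\<in>Ob K. \<forall>C'\<in>Ob K. \<forall>A\<in>Ob K. \<forall>A'\<in>Ob K. \<forall>a\<in>Hom K A A'. \<forall>c\<in>Hom K C' C. \<forall>d\<in>Ext K C A.
        push K a (pull K c d) = pull K c (push K a d))
   \<and> (\<forall>C\<in>Ob K. \<forall>A\<in>Ob K. \<forall>A'\<in>Ob K. \<forall>a\<in>Hom K A A'. \<forall>d\<in>Ext K C A. \<forall>d'\<in>Ext K C A.
        push K a (eadd K d d') = eadd K (push K a d) (push K a d'))
   \<and> (\<forall>C\<in>Ob K. \<forall>A\<in>Ob K. \<forall>A'\<in>Ob K. \<forall>a\<in>Hom K A A'. \<forall>a'\<in>Hom K A A'. \<forall>d\<in>Ext K C A.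
        push K (madd K a a') d = eadd K (push K a d) (push K a' d))
   \<and> (\<forall>C\<in>Ob K. \<forall>C'\<in>Ob K. \<forall>A\<in>Ob K. \<forall>c\<in>Hom K C' C. \<forall>d\<in>Ext K C A. \<forall>d'\<in>Ext K C A.
        pull K c (eadd K d d') = eadd K (pull K c d) (pull K c d'))
   \<and> (\<forall>C\<in>Ob K. \<forall>C'\<in>Ob K. \<forall>A\<in>Ob K. \<forall>c\<in>Hom K C' C. \<forall>c'\<in>Hom K C' C. \<forall>d\<in>Ext K C A.
        pull K (madd K c c') d = eadd K (pull K c d) (pull K c' d))"

definition realization :: "('o, 'm, 'e) extri \<Rightarrow> bool" where
  "realization K \<longleftrightarrow>
     (\<forall>A B C x y d. etri K A B C x y d \<longrightarrow> A \<in> Ob K \<and> B \<in> Ob K \<and> C \<in> Ob K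
        \<and> x \<in> Hom K A B \<and> y \<in> Hom K B C \<and> d \<in> Ext K C A)
   \<and> (\<forall>A\<in>Ob K. \<forall>C\<in>Ob K. \<forall>d\<in>Ext K C A. \<exists>B x y. etri K A B C x y d)
   \<comment> \<open>s(d) is exactly one equivalence class of sequences\<close>
   \<and> (\<forall>A B C x y d B' x' y'. etri K A B C x y d \<longrightarrow>
        (etri K A B' C x' y' d \<longleftrightarrow> B' \<in> Ob K \<and> x' \<in> Hom K A B' \<and> y' \<in> Hom K B' C \<and>
            (\<exists>b. iso K B B' b \<and> cmp K b x = x' \<and> cmp K y' b = y)))
   \<comment> \<open>realization condition for morphisms of extensions\<close>
   \<and> (\<forall>A B C x y d A' B' C' x' y' d' a c. etri K A B C x y d \<longrightarrow> etri K A' B' C' x' y' d'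
        \<longrightarrow> a \<in> Hom K A A' \<longrightarrow> c \<in> Hom K C C' \<longrightarrow> push K a d = pull K c d' \<longrightarrow>
        (\<exists>b\<in>Hom K B B'. cmp K b x = cmp K x' a \<and> cmp K y' b = cmp K c y))
   \<comment> \<open>additivity: s(0) = 0\<close>
   \<and> (\<forall>A C S i1 i2 p1 p2. is_biprod K A C S i1 i2 p1 p2 \<longrightarrow> etri K A S C i1 p2 (ezero K C A))
   \<comment> \<open>additivity: s(d \<oplus> d') = s(d) \<oplus> s(d')\<close>
   \<and> (\<forall>A B C x y d A' B' C' x' y' d'
        AA iA iA' pA pA' BB iB iB' pB pB' CC iC iC' pC pC'.
        etri K A B C x y d \<longrightarrow> etri K A' B' C' x' y' d' \<longrightarrow>
        is_biprod K A A' AA iA iA' pA pA' \<longrightarrow> is_biprod K B B' BB iB iB' pB pB' \<longrightarrow>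
        is_biprod K C C' CC iC iC' pC pC' \<longrightarrow>
        etri K AA BB CC
          (madd K (cmp K iB (cmp K x pA)) (cmp K iB' (cmp K x' pA')))
          (madd K (cmp K iC (cmp K y pB)) (cmp K iC' (cmp K y' pB')))
          (eadd K (push K iA (pull K pC d)) (push K iA' (pull K pC' d'))))"

definition ET3 :: "('o, 'm, 'e) extri \<Rightarrow> bool" where
  "ET3 K \<longleftrightarrow> (\<forall>A B C x y d A' B' C' x' y' d' a b. etri K A B C x y d \<longrightarrow> etri K A' B' C' x' y' d'
        \<longrightarrow> a \<in> Hom K A A' \<longrightarrow> b \<in> Hom K B B' \<longrightarrow> cmp K b x = cmp K x' a \<longrightarrow>
        (\<exists>c\<in>Hom K C C'. cmp K c y = cmp K y' b \<and> push K a d = pull K c d'))"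

definition ET3op :: "('o, 'm, 'e) extri \<Rightarrow> bool" where
  "ET3op K \<longleftrightarrow> (\<forall>A B C x y d A' B' C' x' y' d' b c. etri K A B C x y d \<longrightarrow> etri K A' B' C' x' y' d'
        \<longrightarrow> b \<in> Hom K B B' \<longrightarrow> c \<in> Hom K C C' \<longrightarrow> cmp K c y = cmp K y' b \<longrightarrow>
        (\<exists>a\<in>Hom K A A'. cmp K x' a = cmp K b x \<and> push K a d = pull K c d'))"

definition ET4 :: "('o, 'm, 'e) extri \<Rightarrow> bool" where
  "ET4 K \<longleftrightarrow> (\<forall>A B C D F f f' g g' d d'.
        etri K A B D f f' d \<longrightarrow> etri K B C F g g' d' \<longrightarrow>
        (\<exists>E h h' dd e d''. E \<in> Ob K \<and> h \<in> Hom K A C \<and> h' \<in> Hom K C E \<and> dd \<in> Hom K D E \<and> e \<in> Hom K E F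
           \<and> h = cmp K g f \<and> cmp K h' g = cmp K dd f' \<and> cmp K e h' = g'
           \<and> etri K A C E h h' d''
           \<and> etri K D E F dd e (push K f' d')
           \<and> pull K dd d'' = d
           \<and> push K f d'' = pull K e d'))"

definition ET4op :: "('o, 'm, 'e) extri \<Rightarrow> bool" where
  "ET4op K \<longleftrightarrow> (\<forall>A B C D F f f' g g' d d'.
        etri K D A B f' f d \<longrightarrow> etri K F B C g' g d' \<longrightarrow>
        (\<exists>E h h' dd e d''. E \<in> Ob K \<and> h \<in> Hom K A C \<and> h' \<in> Hom K E A \<and> dd \<in> Hom K D E \<and> e \<in> Hom K E F
           \<and> cmp K h' dd = f' \<and> cmp K f h' = cmp K g' e \<and> h = cmp K g f
           \<and> etri K E A C h' h d''
           \<and> etri K D E F dd e (pull K g' d)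
           \<and> d' = push K e d''
           \<and> push K dd d = pull K g d''))"

definition extriangulated :: "('o, 'm, 'e) extri \<Rightarrow> bool" where
  "extriangulated K \<longleftrightarrow> additive K \<and> biadditive_E K \<and> realization K
     \<and> ET3 K \<and> ET3op K \<and> ET4 K \<and> ET4op K"

definition msum :: "('o, 'm, 'e) extri \<Rightarrow> 'o \<Rightarrow> 'o \<Rightarrow> 'm list \<Rightarrow> 'm" where
  "msum K A B fs = foldr (madd K) fs (mzero K A B)"

definition dsum_decomp :: "('o, 'm, 'e) extri \<Rightarrow> 'o \<Rightarrow> nat \<Rightarrow> (nat \<Rightarrow> 'o) \<Rightarrow> (nat \<Rightarrow> 'm) \<Rightarrow> (nat \<Rightarrow> 'm) \<Rightarrow> bool" where
  "dsum_decomp K A n Bs incl prj \<longleftrightarrow> A \<in> Ob K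
     \<and> (\<forall>i<n. Bs i \<in> Ob K \<and> incl i \<in> Hom K (Bs i) A \<and> prj i \<in> Hom K A (Bs i))
     \<and> (\<forall>i<n. \<forall>j<n. cmp K (prj i) (incl j) = (if i = j then idm K (Bs i) else mzero K (Bs j) (Bs i)))
     \<and> msum K A A (map (\<lambda>i. cmp K (incl i) (prj i)) [0..<n]) = idm K A"

definition local_obj :: "('o, 'm, 'e) extri \<Rightarrow> 'o \<Rightarrow> bool" where
  "local_obj K A \<longleftrightarrow> A \<in> Ob K \<and> idm K A \<noteq> mzero K A A \<and>
     (\<forall>f\<in>Hom K A A. iso K A A f \<or> iso K A A (madd K (idm K A) (mneg K f)))"

definition krull_schmidt :: "('o, 'm, 'e) extri \<Rightarrow> bool" where
  "krull_schmidt K \<longleftrightarrow> (\<forall>A\<in>Ob K. \<exists>n Bs incl prj. dsum_decomp K A n Bs incl prj \<and> (\<forall>i<n. local_obj K (Bs i)))"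

definition projective :: "('o, 'm, 'e) extri \<Rightarrow> 'o \<Rightarrow> bool" where
  "projective K P \<longleftrightarrow> P \<in> Ob K \<and> (\<forall>A\<in>Ob K. Ext K P A = {ezero K P A})"

definition injective :: "('o, 'm, 'e) extri \<Rightarrow> 'o \<Rightarrow> bool" where
  "injective K I \<longleftrightarrow> I \<in> Ob K \<and> (\<forall>A\<in>Ob K. Ext K A I = {ezero K A I})"

definition enough_proj :: "('o, 'm, 'e) extri \<Rightarrow> bool" where
  "enough_proj K \<longleftrightarrow> (\<forall>C\<in>Ob K. \<exists>A P x y d. etri K A P C x y d \<and> projective K P)"

definition enough_inj :: "('o, 'm, 'e) extri \<Rightarrow> bool" where
  "enough_inj K \<longleftrightarrow> (\<forall>A\<in>Ob K. \<exists>I C x y d. etri K A I C x y d \<and> injective K I)"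

(* full additive subcategory closed under isomorphisms (given by its class of objects) *)
definition subcat :: "('o, 'm, 'e) extri \<Rightarrow> 'o set \<Rightarrow> bool" where
  "subcat K S \<longleftrightarrow> S \<subseteq> Ob K
     \<and> (\<forall>A B f. A \<in> S \<longrightarrow> iso K A B f \<longrightarrow> B \<in> S)
     \<and> (\<forall>Z. is_zero_obj K Z \<longrightarrow> Z \<in> S)
     \<and> (\<forall>A B T i1 i2 p1 p2. A \<in> S \<longrightarrow> B \<in> S \<longrightarrow> is_biprod K A B T i1 i2 p1 p2 \<longrightarrow> T \<in> S)"

definition ext_closed :: "('o, 'm, 'e) extri \<Rightarrow> 'o set \<Rightarrow> bool" where
  "ext_closed K S \<longleftrightarrow> (\<forall>A B C x y d. etri K A B C x y d \<longrightarrow> A \<in> S \<longrightarrow> C \<in> S \<longrightarrow> B \<in> S)"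

definition summand_closed :: "('o, 'm, 'e) extri \<Rightarrow> 'o set \<Rightarrow> bool" where
  "summand_closed K S \<longleftrightarrow> (\<forall>A B T i1 i2 p1 p2. is_biprod K A B T i1 i2 p1 p2 \<longrightarrow> T \<in> S \<longrightarrow> A \<in> S \<and> B \<in> S)"

definition left_approx :: "('o, 'm, 'e) extri \<Rightarrow> 'o set \<Rightarrow> 'o \<Rightarrow> 'o \<Rightarrow> 'm \<Rightarrow> bool" where
  "left_approx K S C X f \<longleftrightarrow> X \<in> S \<and> f \<in> Hom K C X \<and>
     (\<forall>X'\<in>S. \<forall>g\<in>Hom K C X'. \<exists>h\<in>Hom K X X'. cmp K h f = g)"

definition right_approx :: "('o, 'm, 'e) extri \<Rightarrow> 'o set \<Rightarrow> 'o \<Rightarrow> 'o \<Rightarrow> 'm \<Rightarrow> bool" where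
  "right_approx K S C Y f \<longleftrightarrow> Y \<in> S \<and> f \<in> Hom K Y C \<and>
     (\<forall>Y'\<in>S. \<forall>g\<in>Hom K Y' C. \<exists>h\<in>Hom K Y' Y. cmp K f h = g)"

definition cov_finite :: "('o, 'm, 'e) extri \<Rightarrow> 'o set \<Rightarrow> bool" where
  "cov_finite K S \<longleftrightarrow> (\<forall>C\<in>Ob K. \<exists>X f. left_approx K S C X f)"

definition contra_finite :: "('o, 'm, 'e) extri \<Rightarrow> 'o set \<Rightarrow> bool" where
  "contra_finite K S \<longleftrightarrow> (\<forall>C\<in>Ob K. \<exists>Y f. right_approx K S C Y f)"

definition perpL :: "('o, 'm, 'e) extri \<Rightarrow> 'o set \<Rightarrow> 'o set" where
  "perpL K S = {Y \<in> Ob K. \<forall>X\<in>S. Ext K Y X = {ezero K Y X}}"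

definition perpR :: "('o, 'm, 'e) extri \<Rightarrow> 'o set \<Rightarrow> 'o set" where
  "perpR K S = {Y \<in> Ob K. \<forall>X\<in>S. Ext K X Y = {ezero K X Y}}"

end

theory Submission
  imports Defs "HOL-Algebra.Ring"
begin

text \<open>A projective presentation \<open>A \<rightarrowtail> P \<twoheadrightarrow> C\<close> of \<open>C\<close> pushed out along a left
  \<open>\<X>\<close>-approximation \<open>A \<rightarrow> S\<close> gives \<open>\<delta> \<in> \<EE>(C, S)\<close> such that every extension of \<open>C\<close> by an object of \<open>\<X>\<close> is a
  pushout of \<open>\<delta>\<close>. Among such extensions on \<open>S\<close>, take one whose support in a Krull--Schmidt decomposition
  of \<open>S\<close> is smallest. Locality of the summands' endomorphism rings turns this into left minimality on the
  support summand \<open>T\<close>: every endomorphism of \<open>T\<close> fixing the extension is a split epimorphism (an element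
  of the Jacobson radical of a corner of \<open>End(S)\<close> would otherwise let one more summand be dropped). For
  such a left minimal extension \<open>T \<rightarrowtail> Y \<twoheadrightarrow> C\<close>, Wakamatsu's argument with (ET4)\<open>\<^sup>o\<^sup>p\<close> shows
  \<open>Y \<in> \<^sup>\<perp>\<^sup>1\<X>\<close>, and \<open>Y \<rightarrow> C\<close> is a right approximation because \<open>\<EE>(Y', T) = 0\<close> for \<open>Y' \<in> \<^sup>\<perp>\<^sup>1\<X>\<close>.
  Part (2) is part (1) in the opposite extriangulated category.\<close>

section \<open>Corner rings\<close>

context ring
begin

lemma mult_assoc_zero:
  "a \<otimes> b = \<zero> \<Longrightarrow> a \<in> carrier R \<Longrightarrow> b \<in> carrier R \<Longrightarrow> c \<in> carrier R \<Longrightarrow> a \<otimes> (b \<otimes> c) = \<zero>"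
  by (metis l_null m_assoc)

lemma mult_assoc_absorb_left:
  "a \<otimes> b = a \<Longrightarrow> a \<in> carrier R \<Longrightarrow> b \<in> carrier R \<Longrightarrow> c \<in> carrier R \<Longrightarrow> a \<otimes> (b \<otimes> c) = a \<otimes> c"
  by (metis m_assoc)

lemma mult_assoc_absorb_right:
  "a \<otimes> b = b \<Longrightarrow> a \<in> carrier R \<Longrightarrow> b \<in> carrier R \<Longrightarrow> c \<in> carrier R \<Longrightarrow> a \<otimes> (b \<otimes> c) = b \<otimes> c"
  by (metis m_assoc)

lemmas mult_absorb_simps = mult_assoc_zero mult_assoc_absorb_left mult_assoc_absorb_right

lemma eq_minus_imp_add:
  "c = a \<ominus> b \<Longrightarrow> a \<in> carrier R \<Longrightarrow> b \<in> carrier R \<Longrightarrow> a = c \<oplus> b"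
  by (simp add: minus_eq a_assoc l_neg)

lemma eq_add_imp_minus:
  "a = u \<oplus> b \<Longrightarrow> u \<in> carrier R \<Longrightarrow> b \<in> carrier R \<Longrightarrow> a \<ominus> b = u"
  by (simp add: minus_eq a_assoc r_neg)

lemma minus_add_cancel: "a \<in> carrier R \<Longrightarrow> b \<in> carrier R \<Longrightarrow> a \<ominus> b \<oplus> b = a"
  by algebra

lemma one_minus_mult_one_minus:
  assumes "a \<in> carrier R" "e \<in> carrier R" "a \<otimes> e = e"
  shows "(\<one> \<ominus> a) \<otimes> (\<one> \<ominus> e) = \<one> \<ominus> a"
proof -
  have "(\<one> \<ominus> a) \<otimes> (\<one> \<ominus> e) = \<one> \<ominus> a \<ominus> e \<oplus> a \<otimes> e"
    using assms(1,2) by (simp add: minus_eq l_distr r_distr l_minus r_minus minus_add minus_minus a_ac)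
  also have "\<dots> = \<one> \<ominus> a" using assms by (simp only:) algebra
  finally show ?thesis .
qed

text \<open>For an idempotent \<open>e\<close>, the elements \<open>u\<close> with \<open>e \<otimes> u \<otimes> e = u\<close> form the corner ring \<open>eRe\<close> with
  unit \<open>e\<close>. \<open>corner_unit e u\<close>: \<open>u\<close> is a unit of \<open>eRe\<close>; \<open>local_idem e\<close>: \<open>eRe\<close> is a nonzero local ring;
  \<open>corner_radical e x\<close>: \<open>eRxe\<close> lies in the Jacobson radical of \<open>eRe\<close>.\<close>
definition corner_unit :: "'a \<Rightarrow> 'a \<Rightarrow> bool" where
  "corner_unit e u \<longleftrightarrow> u \<in> carrier R \<and> e \<otimes> u \<otimes> e = u \<and>
     (\<exists>w\<in>carrier R. e \<otimes> w \<otimes> e = w \<and> u \<otimes> w = e \<and> w \<otimes> u = e)"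

definition local_idem :: "'a \<Rightarrow> bool" where
  "local_idem e \<longleftrightarrow> e \<in> carrier R \<and> e \<otimes> e = e \<and> e \<noteq> \<zero> \<and>
     (\<forall>z\<in>carrier R. corner_unit e (e \<otimes> z \<otimes> e) \<or> corner_unit e (e \<ominus> e \<otimes> z \<otimes> e))"

definition corner_radical :: "'a \<Rightarrow> 'a \<Rightarrow> bool" where
  "corner_radical e x \<longleftrightarrow> (\<forall>y\<in>carrier R. \<not> corner_unit e (e \<otimes> y \<otimes> x \<otimes> e))"

lemma corner_absorb:
  assumes "e \<in> carrier R" "e \<otimes> e = e" "u \<in> carrier R" "e \<otimes> u \<otimes> e = u"
  shows "e \<otimes> u = u" "u \<otimes> e = u"
  using assms by (metis m_assoc m_closed)+

lemma local_idemD: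
  assumes "local_idem e"
  shows "e \<in> carrier R" "e \<otimes> e = e" "e \<noteq> \<zero>"
  using assms unfolding local_idem_def by auto

lemma corner_unit_corner:
  assumes "corner_unit e u" "e \<in> carrier R" "e \<otimes> e = e"
  shows "u \<in> carrier R" "e \<otimes> u = u" "u \<otimes> e = u"
proof -
  show u: "u \<in> carrier R" using assms(1) unfolding corner_unit_def by blast
  show "e \<otimes> u = u" "u \<otimes> e = u"
    using corner_absorb[OF assms(2,3) u] assms(1) unfolding corner_unit_def by blast+
qed

lemma corner_unit_inverse:
  assumes "corner_unit e u" "e \<in> carrier R" "e \<otimes> e = e"
  shows "\<exists>w\<in>carrier R. e \<otimes> w = w \<and> w \<otimes> e = w \<and> u \<otimes> w = e \<and> w \<otimes> u = e"
proof -
  obtain w where "w \<in> carrier R" "e \<otimes> w \<otimes> e = w" "u \<otimes> w = e" "w \<otimes> u = e"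
    using assms(1) unfolding corner_unit_def by blast
  then show ?thesis using corner_absorb[OF assms(2,3)] by blast
qed

lemma corner_unitI:
  assumes "e \<in> carrier R" "u \<in> carrier R" "w \<in> carrier R" "e \<otimes> u = u" "u \<otimes> e = u"
    "e \<otimes> w = w" "w \<otimes> e = w" "u \<otimes> w = e" "w \<otimes> u = e"
  shows "corner_unit e u"
  unfolding corner_unit_def using assms by (intro conjI bexI[of _ w]) simp_all

lemma local_idem_idempotent_cases:
  assumes l: "local_idem e" and t: "t \<in> carrier R" "e \<otimes> t = t" "t \<otimes> e = t" "t \<otimes> t = t"
  shows "t = \<zero> \<or> t = e"
proof -
  note e = local_idemD[OF l]
  have "e \<otimes> t \<otimes> e = t" using t e by (simp add: m_assoc)
  then consider "corner_unit e t" | "corner_unit e (e \<ominus> t)"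
    using l t(1) unfolding local_idem_def by metis
  then show ?thesis
  proof cases
    case 1
    then obtain w where w: "w \<in> carrier R" "t \<otimes> w = e" using corner_unit_inverse[OF _ e(1,2)] by blast
    have "t = (t \<otimes> t) \<otimes> w" using w t by (metis m_assoc)
    then show ?thesis using w t by metis
  next
    case 2
    then obtain w where w: "w \<in> carrier R" "w \<otimes> (e \<ominus> t) = e" using corner_unit_inverse[OF _ e(1,2)] by blast
    have "(e \<ominus> t) \<otimes> t = \<zero>" using t e by (simp add: l_minus minus_eq l_distr r_neg)
    then have "t = w \<otimes> ((e \<ominus> t) \<otimes> t)" using w t e by (metis m_assoc minus_closed)
    then show ?thesis using \<open>(e \<ominus> t) \<otimes> t = \<zero>\<close> w by simp
  qed
qed

lemma corner_unit_idem: "e \<in> carrier R \<Longrightarrow> e \<otimes> e = e \<Longrightarrow> corner_unit e e"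
  by (rule corner_unitI[where w = e]) simp_all

lemma corner_unit_cancel_right:
  assumes e: "e \<in> carrier R" "e \<otimes> e = e" and v: "v \<in> carrier R" "e \<otimes> v = v" "v \<otimes> e = v"
    and vw: "corner_unit e (v \<otimes> w)" and w: "corner_unit e w"
  shows "corner_unit e v"
proof -
  obtain u where u: "u \<in> carrier R" "e \<otimes> u = u" "w \<otimes> u = e" "u \<otimes> w = e"
    and w': "w \<in> carrier R" "e \<otimes> w = w" "w \<otimes> e = w"
    using corner_unit_inverse[OF w e] corner_unit_corner[OF w e] by blast
  obtain r where r: "r \<in> carrier R" "e \<otimes> r = r" "r \<otimes> e = r" "v \<otimes> w \<otimes> r = e" "r \<otimes> (v \<otimes> w) = e"
    using corner_unit_inverse[OF vw e] by blast
  have "r \<otimes> v = r \<otimes> v \<otimes> (w \<otimes> u)" using e r v u w' by (simp add: m_assoc)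
  also have "\<dots> = u" using r v u w' by (metis m_assoc m_closed)
  finally have rv: "r \<otimes> v = u" .
  show ?thesis
  proof (rule corner_unitI[where w = "w \<otimes> r"])
    show "v \<otimes> (w \<otimes> r) = e" using r v w' by (simp flip: m_assoc)
    show "w \<otimes> r \<otimes> v = e" using e rv u w' r v by (simp add: m_assoc)
  qed (use e v w' r in \<open>simp_all add: m_assoc mult_absorb_simps\<close>)
qed

lemma corner_unit_add:
  assumes l: "local_idem e" and u1: "u1 \<in> carrier R" "e \<otimes> u1 = u1" "u1 \<otimes> e = u1"
    and u2: "u2 \<in> carrier R" "e \<otimes> u2 = u2" "u2 \<otimes> e = u2"
    and s: "corner_unit e (u1 \<oplus> u2)"
  shows "corner_unit e u1 \<or> corner_unit e u2"
proof -
  note e = local_idemD[OF l]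
  obtain w where w: "w \<in> carrier R" "e \<otimes> w = w" "w \<otimes> e = w" "(u1 \<oplus> u2) \<otimes> w = e" "w \<otimes> (u1 \<oplus> u2) = e"
    using corner_unit_inverse[OF s e(1,2)] by blast
  have wu: "corner_unit e w"
    by (rule corner_unitI[where w = "u1 \<oplus> u2"]) (use e u1 u2 w in \<open>simp_all add: l_distr r_distr\<close>)
  have "e = u1 \<otimes> w \<oplus> u2 \<otimes> w" using w u1 u2 by (simp add: l_distr)
  then have "e \<ominus> u1 \<otimes> w = (u1 \<otimes> w \<oplus> u2 \<otimes> w) \<ominus> u1 \<otimes> w" by (simp only:)
  also have "\<dots> = u2 \<otimes> w" using u1(1) u2(1) w(1) by algebra
  finally have sum: "e \<ominus> u1 \<otimes> w = u2 \<otimes> w" .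
  have "e \<otimes> (u1 \<otimes> w) \<otimes> e = u1 \<otimes> w"
    using e u1 w by (simp add: m_assoc mult_absorb_simps)
  then have "corner_unit e (u1 \<otimes> w) \<or> corner_unit e (u2 \<otimes> w)"
    using l u1(1) w(1) sum unfolding local_idem_def by (metis m_closed)
  then show ?thesis
    using corner_unit_cancel_right[OF e(1,2) u1 _ wu] corner_unit_cancel_right[OF e(1,2) u2 _ wu] by blast
qed

lemma corner_radicalD:
  "corner_radical e x \<Longrightarrow> y \<in> carrier R \<Longrightarrow> \<not> corner_unit e (e \<otimes> y \<otimes> x \<otimes> e)"
  unfolding corner_radical_def by blast

lemma corner_radical_add:
  assumes l: "local_idem e" and x: "x1 \<in> carrier R" "x2 \<in> carrier R"
    and r: "corner_radical e x1" "corner_radical e x2"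
  shows "corner_radical e (x1 \<oplus> x2)"
  unfolding corner_radical_def
proof (intro ballI notI)
  fix y assume y: "y \<in> carrier R" and u: "corner_unit e (e \<otimes> y \<otimes> (x1 \<oplus> x2) \<otimes> e)"
  note e = local_idemD[OF l]
  have corner: "e \<otimes> y \<otimes> x \<otimes> e \<in> carrier R" "e \<otimes> (e \<otimes> y \<otimes> x \<otimes> e) = e \<otimes> y \<otimes> x \<otimes> e"
    "e \<otimes> y \<otimes> x \<otimes> e \<otimes> e = e \<otimes> y \<otimes> x \<otimes> e" if "x \<in> carrier R" for x
    using e y that by (simp_all add: m_assoc mult_absorb_simps)
  have "e \<otimes> y \<otimes> (x1 \<oplus> x2) \<otimes> e = e \<otimes> y \<otimes> x1 \<otimes> e \<oplus> e \<otimes> y \<otimes> x2 \<otimes> e"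
    using e x y by (simp add: l_distr r_distr)
  with u have "corner_unit e (e \<otimes> y \<otimes> x1 \<otimes> e \<oplus> e \<otimes> y \<otimes> x2 \<otimes> e)" by simp
  then have "corner_unit e (e \<otimes> y \<otimes> x1 \<otimes> e) \<or> corner_unit e (e \<otimes> y \<otimes> x2 \<otimes> e)"
    by (rule corner_unit_add[OF l corner[OF x(1)] corner[OF x(2)]])
  then show False using r y by (auto dest: corner_radicalD)
qed

lemma corner_radical_mult_left:
  assumes "corner_radical e x" "e \<in> carrier R" "x \<in> carrier R" "z \<in> carrier R"
  shows "corner_radical e (z \<otimes> x)"
  unfolding corner_radical_def
proof (intro ballI)
  fix y assume "y \<in> carrier R"
  then show "\<not> corner_unit e (e \<otimes> y \<otimes> (z \<otimes> x) \<otimes> e)"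
    using corner_radicalD[OF assms(1), of "y \<otimes> z"] assms by (simp add: m_assoc)
qed

lemma corner_radical_mult_right:
  assumes "corner_radical e x" "e \<in> carrier R" "x \<in> carrier R" "w \<in> carrier R" "w \<otimes> e = e"
  shows "corner_radical e (x \<otimes> w)"
  unfolding corner_radical_def
proof (intro ballI)
  fix y assume "y \<in> carrier R"
  then show "\<not> corner_unit e (e \<otimes> y \<otimes> (x \<otimes> w) \<otimes> e)"
    using corner_radicalD[OF assms(1), of y] assms by (simp add: m_assoc)
qed

text \<open>A unit of the corner at \<open>e\<^sub>l\<close> factoring through \<open>x \<otimes> e\<^sub>k\<close> would produce a nonzero idempotent
  \<open>e\<^sub>k \<otimes> b \<otimes> a\<close> in the local corner at \<open>e\<^sub>k\<close>, which then must be \<open>e\<^sub>k\<close> itself.\<close>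
lemma corner_radical_transfer:
  assumes k: "local_idem ek" and l: "local_idem el" and x: "x \<in> carrier R" and v: "v \<in> carrier R"
    and rad: "corner_radical ek x"
  shows "corner_radical el (x \<otimes> ek \<otimes> v)"
  unfolding corner_radical_def
proof (intro ballI notI)
  fix y assume y: "y \<in> carrier R" and u: "corner_unit el (el \<otimes> y \<otimes> (x \<otimes> ek \<otimes> v) \<otimes> el)"
  note ek = local_idemD[OF k] and el = local_idemD[OF l]
  obtain w where w: "w \<in> carrier R" "el \<otimes> y \<otimes> (x \<otimes> ek \<otimes> v) \<otimes> el \<otimes> w = el"
    using corner_unit_inverse[OF u el(1,2)] by blast
  define a where "a = el \<otimes> y \<otimes> x \<otimes> ek"
  define b where "b = v \<otimes> el \<otimes> w"
  have ab: "a \<in> carrier R" "b \<in> carrier R" "a \<otimes> ek = a" "el \<otimes> a = a"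
    unfolding a_def b_def using ek el x y v w by (simp_all add: m_assoc mult_absorb_simps)
  have abe: "a \<otimes> b = el" using w(2) ek el x y v w unfolding a_def b_def by (simp add: m_assoc)
  have abz: "a \<otimes> (b \<otimes> z) = el \<otimes> z" if "z \<in> carrier R" for z
    using abe ab that by (simp flip: m_assoc)
  define t where "t = ek \<otimes> b \<otimes> a"
  have t: "t \<in> carrier R" "ek \<otimes> t = t" "t \<otimes> ek = t" "t \<otimes> t = t"
    unfolding t_def using ab abz ek by (simp_all add: m_assoc mult_absorb_simps)
  from local_idem_idempotent_cases[OF k t] show False
  proof
    assume "t = \<zero>"
    have "el = (a \<otimes> b) \<otimes> (a \<otimes> b)" using abe el by simp
    also have "\<dots> = a \<otimes> t \<otimes> b" unfolding t_def using ab ek by (simp add: m_assoc mult_absorb_simps)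
    finally show False using \<open>t = \<zero>\<close> ab el by simp
  next
    assume "t = ek"
    then have "corner_unit ek (ek \<otimes> (b \<otimes> el \<otimes> y) \<otimes> x \<otimes> ek)"
      using corner_unit_idem[OF ek(1,2)] ab ek el x y unfolding t_def a_def by (simp add: m_assoc)
    then show False using rad ab el y by (meson corner_radicalD m_closed)
  qed
qed

text \<open>Gaussian elimination in a \<open>2 \<times> 2\<close> Peirce decomposition: \<open>a\<close> inverts \<open>e \<ominus> e \<otimes> x \<otimes> e\<close> from the right,
  and \<open>s\<close> does the same for the Schur complement of \<open>f \<ominus> f \<otimes> x \<otimes> f\<close>.\<close>
lemma block_right_inverse:
  assumes e: "e \<in> carrier R" and f: "f \<in> carrier R" and ef: "e \<otimes> f = \<zero>"
    and x: "x \<in> carrier R" "(e \<oplus> f) \<otimes> x = x"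
    and a: "a \<in> carrier R" "a \<otimes> e = a" "a = e \<oplus> e \<otimes> x \<otimes> a"
    and s: "s \<in> carrier R" "s \<otimes> e = \<zero>" "s \<otimes> f = s" "s = f \<oplus> f \<otimes> x \<otimes> s \<oplus> f \<otimes> x \<otimes> a \<otimes> x \<otimes> s"
  shows "\<exists>g\<in>carrier R. g = (e \<oplus> f) \<oplus> x \<otimes> g \<and> g \<otimes> (e \<oplus> f) = g"
proof (intro bexI conjI)
  define g where "g = s \<oplus> s \<otimes> x \<otimes> a \<oplus> a \<otimes> x \<otimes> s \<oplus> a \<otimes> x \<otimes> s \<otimes> x \<otimes> a \<oplus> a"
  show g: "g \<in> carrier R" unfolding g_def using s a x by simp
  have af: "a \<otimes> f = \<zero>" using a(1,2) e f ef by (metis m_assoc r_null)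
  show "g \<otimes> (e \<oplus> f) = g"
    unfolding g_def using e f x a(1,2) s(1-3) af by (simp add: l_distr r_distr m_assoc a_ac)
  have "f \<otimes> x \<otimes> g \<oplus> f = (f \<oplus> f \<otimes> x \<otimes> s \<oplus> f \<otimes> x \<otimes> a \<otimes> x \<otimes> s)
      \<oplus> (f \<oplus> f \<otimes> x \<otimes> s \<oplus> f \<otimes> x \<otimes> a \<otimes> x \<otimes> s) \<otimes> x \<otimes> a"
    unfolding g_def using e f x(1) a(1) s(1) by (simp add: l_distr r_distr m_assoc a_ac)
  also have "\<dots> = s \<oplus> s \<otimes> x \<otimes> a" using s(4) by simp
  finally have fx: "f \<otimes> x \<otimes> g \<oplus> f = s \<oplus> s \<otimes> x \<otimes> a" .
  have "e \<otimes> x \<otimes> g \<oplus> e = (e \<oplus> e \<otimes> x \<otimes> a) \<oplus> (e \<oplus> e \<otimes> x \<otimes> a) \<otimes> x \<otimes> s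
      \<oplus> (e \<oplus> e \<otimes> x \<otimes> a) \<otimes> x \<otimes> s \<otimes> x \<otimes> a"
    unfolding g_def using e f x(1) a(1) s(1) by (simp add: l_distr r_distr m_assoc a_ac)
  also have "\<dots> = a \<oplus> a \<otimes> x \<otimes> s \<oplus> a \<otimes> x \<otimes> s \<otimes> x \<otimes> a" using a(3) by simp
  finally have ex: "e \<otimes> x \<otimes> g \<oplus> e = a \<oplus> a \<otimes> x \<otimes> s \<oplus> a \<otimes> x \<otimes> s \<otimes> x \<otimes> a" .
  have "x \<otimes> g = (e \<oplus> f) \<otimes> x \<otimes> g" using x(2) by simp
  then have "(e \<oplus> f) \<oplus> x \<otimes> g = (e \<otimes> x \<otimes> g \<oplus> e) \<oplus> (f \<otimes> x \<otimes> g \<oplus> f)"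
    using x(1) e f g by (simp add: l_distr a_ac)
  also have "\<dots> = (a \<oplus> a \<otimes> x \<otimes> s \<oplus> a \<otimes> x \<otimes> s \<otimes> x \<otimes> a) \<oplus> (s \<oplus> s \<otimes> x \<otimes> a)"
    by (simp only: ex fx)
  also have "\<dots> = g" unfolding g_def using a(1) s(1) x(1) by (simp add: a_ac)
  finally show "g = (e \<oplus> f) \<oplus> x \<otimes> g" by simp
qed

definition listsum :: "(nat \<Rightarrow> 'a) \<Rightarrow> nat list \<Rightarrow> 'a" where
  "listsum e js = foldr (\<oplus>) (map e js) \<zero>"

definition orth_idems :: "(nat \<Rightarrow> 'a) \<Rightarrow> nat list \<Rightarrow> bool" where
  "orth_idems e js \<longleftrightarrow> distinct js \<and> (\<forall>j\<in>set js. e j \<in> carrier R \<and> e j \<otimes> e j = e j) \<and>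
     (\<forall>j\<in>set js. \<forall>k\<in>set js. j \<noteq> k \<longrightarrow> e j \<otimes> e k = \<zero>)"

lemma listsum_Nil [simp]: "listsum e [] = \<zero>"
  and listsum_Cons [simp]: "listsum e (j # js) = e j \<oplus> listsum e js"
  unfolding listsum_def by simp_all

lemma listsum_closed: "(\<And>j. j \<in> set js \<Longrightarrow> e j \<in> carrier R) \<Longrightarrow> listsum e js \<in> carrier R"
  by (induction js) auto

lemma orth_idems_ConsD:
  assumes "orth_idems e (k # js)"
  shows "orth_idems e js" "e k \<in> carrier R" "e k \<otimes> e k = e k"
    "\<And>j. j \<in> set js \<Longrightarrow> e j \<in> carrier R \<and> e k \<otimes> e j = \<zero> \<and> e j \<otimes> e k = \<zero>"
  using assms unfolding orth_idems_def by auto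

lemma listsum_mult_zero_right:
  assumes "a \<in> carrier R" "\<And>j. j \<in> set js \<Longrightarrow> e j \<in> carrier R \<and> a \<otimes> e j = \<zero>"
  shows "a \<otimes> listsum e js = \<zero>"
  using assms by (induction js) (simp_all add: r_distr listsum_closed)

lemma listsum_mult_zero_left:
  assumes "a \<in> carrier R" "\<And>j. j \<in> set js \<Longrightarrow> e j \<in> carrier R \<and> e j \<otimes> a = \<zero>"
  shows "listsum e js \<otimes> a = \<zero>"
  using assms by (induction js) (simp_all add: l_distr listsum_closed)

lemma listsum_orth:
  assumes "a \<in> carrier R" "\<And>j. j \<in> set js \<Longrightarrow> e j \<in> carrier R \<and> a \<otimes> e j = \<zero> \<and> e j \<otimes> a = \<zero>"
  shows "a \<otimes> listsum e js = \<zero>" "listsum e js \<otimes> a = \<zero>"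
  using listsum_mult_zero_right[of a js e] listsum_mult_zero_left[of a js e] assms by auto

lemma listsum_mult_listsum_zero:
  assumes "\<And>j. j \<in> set js \<Longrightarrow> e j \<in> carrier R" "\<And>k. k \<in> set ks \<Longrightarrow> e k \<in> carrier R"
    and "\<And>j k. j \<in> set js \<Longrightarrow> k \<in> set ks \<Longrightarrow> e j \<otimes> e k = \<zero>"
  shows "listsum e js \<otimes> listsum e ks = \<zero>"
  using assms by (intro listsum_mult_zero_left listsum_closed) (auto intro!: listsum_mult_zero_right)

lemma listsum_filter:
  assumes "\<And>j. j \<in> set js \<Longrightarrow> e j \<in> carrier R"
  shows "listsum e js = listsum e (filter P js) \<oplus> listsum e (filter (\<lambda>j. \<not> P j) js)"
  using assms
proof (induction js)
  case (Cons k js)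
  have "listsum e (filter P js) \<in> carrier R" "listsum e (filter (\<lambda>j. \<not> P j) js) \<in> carrier R"
    using Cons.prems by (auto intro: listsum_closed)
  then show ?case using Cons by (cases "P k") (simp_all add: a_ac)
qed simp

lemma orth_idems_sublist:
  "orth_idems e js \<Longrightarrow> distinct ks \<Longrightarrow> set ks \<subseteq> set js \<Longrightarrow> orth_idems e ks"
  unfolding orth_idems_def by blast

lemma listsum_absorb:
  assumes "orth_idems e js" "j \<in> set js"
  shows "e j \<otimes> listsum e js = e j \<and> listsum e js \<otimes> e j = e j"
  using assms
proof (induction js)
  case (Cons k js)
  note O = orth_idems_ConsD[OF Cons.prems(1)]
  have f: "listsum e js \<in> carrier R" using O(4) listsum_closed by blast
  show ?case
  proof (cases "j = k")
    case True
    then show ?thesis using O listsum_orth[of "e k" js e] f by (simp add: l_distr r_distr)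
  next
    case False
    then have "j \<in> set js" using Cons.prems(2) by simp
    then show ?thesis using O Cons.IH[OF O(1)] f by (simp add: l_distr r_distr)
  qed
qed simp

lemma listsum_idem:
  assumes "orth_idems e js" shows "listsum e js \<otimes> listsum e js = listsum e js"
  using assms
proof (induction js)
  case (Cons k js)
  note O = orth_idems_ConsD[OF Cons.prems(1)]
  have "listsum e js \<in> carrier R" using O(4) listsum_closed by blast
  then show ?case
    using O Cons.IH[OF O(1)] listsum_orth[of "e k" js e] by (simp add: l_distr r_distr a_ac)
qed simp

lemma corner_radical_right_inverse:
  assumes l: "local_idem e" and x: "x \<in> carrier R" and rad: "corner_radical e x"
  shows "\<exists>a\<in>carrier R. e \<otimes> a = a \<and> a \<otimes> e = a \<and> a = e \<oplus> e \<otimes> x \<otimes> a"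
proof -
  note e = local_idemD[OF l]
  have "\<not> corner_unit e (e \<otimes> x \<otimes> e)" using corner_radicalD[OF rad, of \<one>] e x by simp
  then have "corner_unit e (e \<ominus> e \<otimes> x \<otimes> e)" using l x unfolding local_idem_def by blast
  then obtain a where a: "a \<in> carrier R" "e \<otimes> a = a" "a \<otimes> e = a" "(e \<ominus> e \<otimes> x \<otimes> e) \<otimes> a = e"
    using corner_unit_inverse[OF _ e(1,2)] by blast
  then have "e = a \<ominus> e \<otimes> x \<otimes> a" using e(1) x by (simp add: l_distr minus_eq l_minus m_assoc mult_absorb_simps)
  then show ?thesis using a e(1) x by (auto simp: eq_minus_imp_add)
qed

lemma corner_radical_schur_complement:
  assumes k: "local_idem ek" and l: "local_idem el" and x: "x \<in> carrier R"
    and radk: "corner_radical ek x" and radl: "corner_radical el x"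
    and a: "a \<in> carrier R" and f: "f \<in> carrier R" "f \<otimes> el = el"
  shows "corner_radical el (f \<otimes> x \<otimes> f \<oplus> f \<otimes> (x \<otimes> ek \<otimes> (a \<otimes> x \<otimes> f)))"
proof -
  note ek = local_idemD[OF k] and el = local_idemD[OF l]
  have "corner_radical el (f \<otimes> x \<otimes> f)"
    using radl el f x by (simp add: corner_radical_mult_left corner_radical_mult_right)
  moreover have "corner_radical el (f \<otimes> (x \<otimes> ek \<otimes> (a \<otimes> x \<otimes> f)))"
    using corner_radical_transfer[OF k l x _ radk, of "a \<otimes> x \<otimes> f"] el f x a ek
    by (simp add: corner_radical_mult_left)
  ultimately show ?thesis using corner_radical_add[OF l] f x a ek by simp
qed

lemma quasi_inverse_complement:
  assumes f: "f \<in> carrier R" "f \<otimes> f = f" and x: "x \<in> carrier R" "f \<otimes> x = x"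
    and y: "y \<in> carrier R" "x \<oplus> y = f" and g: "g \<in> carrier R" "g = f \<oplus> x \<otimes> g"
  shows "y \<otimes> g = f"
proof -
  have "f \<otimes> g = f \<otimes> (f \<oplus> x \<otimes> g)" using g(2) by (rule arg_cong)
  also have "\<dots> = f \<oplus> x \<otimes> g" using f x g(1) by (simp add: r_distr flip: m_assoc)
  also have "\<dots> = g" using g(2) by (rule sym)
  finally have fg: "f \<otimes> g = g" .
  have "x \<otimes> g \<oplus> y \<otimes> g = f \<otimes> g" using x y g(1) by (simp flip: l_distr)
  also have "\<dots> = f \<oplus> x \<otimes> g" unfolding fg by (rule g(2))
  also have "\<dots> = x \<otimes> g \<oplus> f" using f x g(1) by (simp add: a_comm)
  finally show ?thesis using f x y g(1) by simp
qed

text \<open>The conclusion says that \<open>g\<close> is a right inverse of \<open>f \<ominus> x\<close> in the corner ring at \<open>f = listsum e js\<close>;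
  the local idempotents are eliminated one at a time by \<open>block_right_inverse\<close>.\<close>
lemma radical_right_quasi_inverse:
  assumes "orth_idems e js" "\<forall>j\<in>set js. local_idem (e j)"
    and "x \<in> carrier R" "listsum e js \<otimes> x \<otimes> listsum e js = x"
    and "\<forall>l\<in>set js. corner_radical (e l) x"
  shows "\<exists>g\<in>carrier R. g = listsum e js \<oplus> x \<otimes> g \<and> g \<otimes> listsum e js = g"
  using assms
proof (induction js arbitrary: x)
  case Nil
  then show ?case by (intro bexI[of _ \<zero>]) auto
next
  case (Cons k js)
  note O = orth_idems_ConsD[OF Cons.prems(1)]
  define f where "f = listsum e js"
  have lk: "local_idem (e k)" and lf: "\<forall>j\<in>set js. local_idem (e j)" using Cons.prems(2) by auto
  have ek: "e k \<in> carrier R" "e k \<otimes> e k = e k" using O by auto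
  have f: "f \<in> carrier R" "f \<otimes> f = f" "e k \<otimes> f = \<zero>" "f \<otimes> e k = \<zero>"
    unfolding f_def using O listsum_closed listsum_idem listsum_orth[of "e k" js e] by auto
  have x: "x \<in> carrier R" "(e k \<oplus> f) \<otimes> x \<otimes> (e k \<oplus> f) = x"
    using Cons.prems(3,4) unfolding f_def by simp_all
  have idem: "(e k \<oplus> f) \<otimes> (e k \<oplus> f) = e k \<oplus> f" using ek f by (simp add: l_distr r_distr)
  have xl: "(e k \<oplus> f) \<otimes> x = x"
    using corner_absorb[OF _ idem x] ek f by simp
  have radk: "corner_radical (e k) x" using Cons.prems(5) by simp
  obtain a where a: "a \<in> carrier R" "e k \<otimes> a = a" "a \<otimes> e k = a" and a_eq: "a = e k \<oplus> e k \<otimes> x \<otimes> a"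
    using corner_radical_right_inverse[OF lk x(1) radk] by blast
  define x' where "x' = f \<otimes> x \<otimes> f \<oplus> f \<otimes> (x \<otimes> e k \<otimes> (a \<otimes> x \<otimes> f))"
  have x': "x' \<in> carrier R" "f \<otimes> x' \<otimes> f = x'"
    unfolding x'_def using f x(1) a(1) ek by (simp_all add: l_distr r_distr m_assoc mult_absorb_simps)
  have rad': "\<forall>l\<in>set js. corner_radical (e l) x'"
    unfolding x'_def using lf Cons.prems(5) listsum_absorb[OF O(1)] f(1) x(1) a(1) radk
    by (auto intro!: corner_radical_schur_complement[OF lk] simp: f_def)
  obtain s where s: "s \<in> carrier R" "s = f \<oplus> x' \<otimes> s" "s \<otimes> f = s"
    using Cons.IH[OF O(1) lf x'[unfolded f_def] rad'[unfolded f_def]] unfolding f_def by blast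
  have fs: "f \<otimes> s = s"
  proof -
    have "f \<otimes> s = f \<otimes> (f \<oplus> x' \<otimes> s)" using s(2) by (rule arg_cong)
    also have "\<dots> = f \<oplus> x' \<otimes> s"
      using f x'(1) s(1) corner_absorb[OF f(1,2) x'] by (simp add: r_distr m_assoc mult_absorb_simps)
    finally show ?thesis using s(2) by simp
  qed
  have "s = f \<oplus> x' \<otimes> s" by (rule s(2))
  also have "\<dots> = f \<oplus> f \<otimes> x \<otimes> s \<oplus> f \<otimes> x \<otimes> a \<otimes> x \<otimes> s"
    unfolding x'_def using f x(1) a s(1) ek fs by (simp add: l_distr m_assoc mult_absorb_simps a_ac)
  finally have s_eq: "s = f \<oplus> f \<otimes> x \<otimes> s \<oplus> f \<otimes> x \<otimes> a \<otimes> x \<otimes> s" .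
  have "s \<otimes> e k = s \<otimes> f \<otimes> e k" using s(3) by simp
  then have se: "s \<otimes> e k = \<zero>" using s(1) f ek by (simp add: m_assoc)
  show ?case
    using block_right_inverse[OF ek(1) f(1) f(3) x(1) xl a(1,3) a_eq s(1) se s(3) s_eq]
    unfolding listsum_Cons f_def .
qed

end

section \<open>Extriangulated categories\<close>

lemma ab_grp_facts:
  assumes "ab_grp S p z n"
  shows "z \<in> S" "\<And>x y. x \<in> S \<Longrightarrow> y \<in> S \<Longrightarrow> p x y \<in> S"
    "\<And>x y w. x \<in> S \<Longrightarrow> y \<in> S \<Longrightarrow> w \<in> S \<Longrightarrow> p (p x y) w = p x (p y w)"
    "\<And>x y. x \<in> S \<Longrightarrow> y \<in> S \<Longrightarrow> p x y = p y x"
    "\<And>x. x \<in> S \<Longrightarrow> p z x = x" "\<And>x. x \<in> S \<Longrightarrow> p x z = x"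
    "\<And>x. x \<in> S \<Longrightarrow> n x \<in> S" "\<And>x. x \<in> S \<Longrightarrow> p (n x) x = z"
  using assms unfolding ab_grp_def by metis+

lemma ab_grp_cancel_left:
  assumes "ab_grp S p z n" "x \<in> S" "y \<in> S" "w \<in> S" "p x y = p x w"
  shows "y = w"
proof -
  have "p (n x) (p x y) = p (n x) (p x w)" using assms by simp
  then show ?thesis using ab_grp_facts[OF assms(1)] assms(2-4) by metis
qed

lemma ab_grp_eq_zero:
  assumes "ab_grp S p z n" "x \<in> S" "y \<in> S" "p x y = y"
  shows "x = z"
  using ab_grp_cancel_left[OF assms(1) assms(3) assms(2), of z] ab_grp_facts[OF assms(1)] assms by metis

definition endo_ring :: "('o, 'm, 'e) extri \<Rightarrow> 'o \<Rightarrow> 'm ring" where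
  "endo_ring K S = \<lparr>carrier = Hom K S S, mult = cmp K, one = idm K S, zero = mzero K S S, add = madd K\<rparr>"

lemma endo_ring_simps [simp]:
  "carrier (endo_ring K S) = Hom K S S" "mult (endo_ring K S) = cmp K" "one (endo_ring K S) = idm K S"
  "zero (endo_ring K S) = mzero K S S" "add (endo_ring K S) = madd K"
  unfolding endo_ring_def by simp_all

locale extri_cat =
  fixes K :: "('o, 'm, 'e) extri"
  assumes preadd: "preadditive K"
    and zero_obj_exists: "\<exists>Z. is_zero_obj K Z"
    and biprod_exists: "\<And>A B. A \<in> Ob K \<Longrightarrow> B \<in> Ob K \<Longrightarrow> \<exists>S i1 i2 p1 p2. is_biprod K A B S i1 i2 p1 p2"
    and biadd: "biadditive_E K"
    and etri_typed: "\<And>A B C x y d. etri K A B C x y d \<Longrightarrow> A \<in> Ob K \<and> B \<in> Ob K \<and> C \<in> Ob K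
        \<and> x \<in> Hom K A B \<and> y \<in> Hom K B C \<and> d \<in> Ext K C A"
    and etri_realizes: "\<And>A C d. A \<in> Ob K \<Longrightarrow> C \<in> Ob K \<Longrightarrow> d \<in> Ext K C A \<Longrightarrow> \<exists>B x y. etri K A B C x y d"
    and etri_morphism: "\<And>A B C x y d A' B' C' x' y' d' a c. etri K A B C x y d \<Longrightarrow> etri K A' B' C' x' y' d'
        \<Longrightarrow> a \<in> Hom K A A' \<Longrightarrow> c \<in> Hom K C C' \<Longrightarrow> push K a d = pull K c d' \<Longrightarrow>
        (\<exists>b\<in>Hom K B B'. cmp K b x = cmp K x' a \<and> cmp K y' b = cmp K c y)"
    and etri_split: "\<And>A C S i1 i2 p1 p2. is_biprod K A C S i1 i2 p1 p2 \<Longrightarrow> etri K A S C i1 p2 (ezero K C A)"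
    and et3op: "ET3op K"
    and et4op: "ET4op K"
begin

abbreviation "ob A \<equiv> A \<in> Ob K"

lemma cmp_closed: "ob A \<Longrightarrow> ob B \<Longrightarrow> ob C \<Longrightarrow> f \<in> Hom K A B \<Longrightarrow> g \<in> Hom K B C \<Longrightarrow> cmp K g f \<in> Hom K A C"
  using preadd unfolding preadditive_def by (elim conjE) blast

lemma idm_closed: "ob A \<Longrightarrow> idm K A \<in> Hom K A A"
  using preadd unfolding preadditive_def by (elim conjE) blast

lemma cmp_idm_left: "ob A \<Longrightarrow> ob B \<Longrightarrow> f \<in> Hom K A B \<Longrightarrow> cmp K (idm K B) f = f"
  using preadd unfolding preadditive_def by (elim conjE) blast

lemma cmp_idm_right: "ob A \<Longrightarrow> ob B \<Longrightarrow> f \<in> Hom K A B \<Longrightarrow> cmp K f (idm K A) = f"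
  using preadd unfolding preadditive_def by (elim conjE) blast

lemma cmp_assoc: "ob A \<Longrightarrow> ob B \<Longrightarrow> ob C \<Longrightarrow> ob D \<Longrightarrow> f \<in> Hom K A B \<Longrightarrow> g \<in> Hom K B C \<Longrightarrow> h \<in> Hom K C D
  \<Longrightarrow> cmp K h (cmp K g f) = cmp K (cmp K h g) f"
  using preadd unfolding preadditive_def by (elim conjE) blast

lemma hom_ab_grp: "ob A \<Longrightarrow> ob B \<Longrightarrow> ab_grp (Hom K A B) (madd K) (mzero K A B) (mneg K)"
  using preadd unfolding preadditive_def by (elim conjE) blast

lemma cmp_madd_left: "ob A \<Longrightarrow> ob B \<Longrightarrow> ob C \<Longrightarrow> f \<in> Hom K A B \<Longrightarrow> f' \<in> Hom K A B \<Longrightarrow> g \<in> Hom K B C \<Longrightarrow>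
  cmp K g (madd K f f') = madd K (cmp K g f) (cmp K g f')"
  using preadd unfolding preadditive_def by (elim conjE) metis

lemma cmp_madd_right: "ob A \<Longrightarrow> ob B \<Longrightarrow> ob C \<Longrightarrow> f \<in> Hom K A B \<Longrightarrow> g \<in> Hom K B C \<Longrightarrow> g' \<in> Hom K B C \<Longrightarrow>
  cmp K (madd K g g') f = madd K (cmp K g f) (cmp K g' f)"
  using preadd unfolding preadditive_def by (elim conjE) metis

lemmas hom_grp = ab_grp_facts[OF hom_ab_grp]

lemma ext_ab_grp: "ob C \<Longrightarrow> ob A \<Longrightarrow> ab_grp (Ext K C A) (eadd K) (ezero K C A) (eneg K)"
  using biadd unfolding biadditive_E_def by (elim conjE) blast

lemmas ext_grp = ab_grp_facts[OF ext_ab_grp]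

lemma push_closed: "ob C \<Longrightarrow> ob A \<Longrightarrow> ob A' \<Longrightarrow> a \<in> Hom K A A' \<Longrightarrow> d \<in> Ext K C A \<Longrightarrow> push K a d \<in> Ext K C A'"
  using biadd unfolding biadditive_E_def by (elim conjE) blast

lemma pull_closed: "ob C \<Longrightarrow> ob C' \<Longrightarrow> ob A \<Longrightarrow> c \<in> Hom K C' C \<Longrightarrow> d \<in> Ext K C A \<Longrightarrow> pull K c d \<in> Ext K C' A"
  using biadd unfolding biadditive_E_def by (elim conjE) blast

lemma push_idm: "ob C \<Longrightarrow> ob A \<Longrightarrow> d \<in> Ext K C A \<Longrightarrow> push K (idm K A) d = d"
  using biadd unfolding biadditive_E_def by (elim conjE) blast

lemma pull_idm: "ob C \<Longrightarrow> ob A \<Longrightarrow> d \<in> Ext K C A \<Longrightarrow> pull K (idm K C) d = d"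
  using biadd unfolding biadditive_E_def by (elim conjE) blast

lemma push_cmp: "ob C \<Longrightarrow> ob A \<Longrightarrow> ob A' \<Longrightarrow> ob A'' \<Longrightarrow> a \<in> Hom K A A' \<Longrightarrow> a' \<in> Hom K A' A'' \<Longrightarrow>
  d \<in> Ext K C A \<Longrightarrow> push K (cmp K a' a) d = push K a' (push K a d)"
  using biadd unfolding biadditive_E_def by (elim conjE) metis

lemma pull_cmp: "ob C \<Longrightarrow> ob C' \<Longrightarrow> ob C'' \<Longrightarrow> ob A \<Longrightarrow> c \<in> Hom K C' C \<Longrightarrow> c' \<in> Hom K C'' C' \<Longrightarrow>
  d \<in> Ext K C A \<Longrightarrow> pull K (cmp K c c') d = pull K c' (pull K c d)"
  using biadd unfolding biadditive_E_def by (elim conjE) metis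

lemma push_pull: "ob C \<Longrightarrow> ob C' \<Longrightarrow> ob A \<Longrightarrow> ob A' \<Longrightarrow> a \<in> Hom K A A' \<Longrightarrow> c \<in> Hom K C' C \<Longrightarrow>
  d \<in> Ext K C A \<Longrightarrow> push K a (pull K c d) = pull K c (push K a d)"
  using biadd unfolding biadditive_E_def by (elim conjE) metis

lemma push_eadd: "ob C \<Longrightarrow> ob A \<Longrightarrow> ob A' \<Longrightarrow> a \<in> Hom K A A' \<Longrightarrow> d \<in> Ext K C A \<Longrightarrow> d' \<in> Ext K C A \<Longrightarrow>
  push K a (eadd K d d') = eadd K (push K a d) (push K a d')"
  using biadd unfolding biadditive_E_def by (elim conjE) metis

lemma push_madd: "ob C \<Longrightarrow> ob A \<Longrightarrow> ob A' \<Longrightarrow> a \<in> Hom K A A' \<Longrightarrow> a' \<in> Hom K A A' \<Longrightarrow> d \<in> Ext K C A \<Longrightarrow>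
  push K (madd K a a') d = eadd K (push K a d) (push K a' d)"
  using biadd unfolding biadditive_E_def by (elim conjE) metis

lemma pull_eadd: "ob C \<Longrightarrow> ob C' \<Longrightarrow> ob A \<Longrightarrow> c \<in> Hom K C' C \<Longrightarrow> d \<in> Ext K C A \<Longrightarrow> d' \<in> Ext K C A \<Longrightarrow>
  pull K c (eadd K d d') = eadd K (pull K c d) (pull K c d')"
  using biadd unfolding biadditive_E_def by (elim conjE) metis

lemma pull_madd: "ob C \<Longrightarrow> ob C' \<Longrightarrow> ob A \<Longrightarrow> c \<in> Hom K C' C \<Longrightarrow> c' \<in> Hom K C' C \<Longrightarrow> d \<in> Ext K C A \<Longrightarrow>
  pull K (madd K c c') d = eadd K (pull K c d) (pull K c' d)"
  using biadd unfolding biadditive_E_def by (elim conjE) metis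

lemma ring_endo_ring:
  assumes S: "ob S" shows "ring (endo_ring K S)"
proof (rule ringI)
  show "abelian_group (endo_ring K S)"
    by (rule abelian_groupI) (use hom_grp[OF S S] in \<open>simp_all, metis\<close>)
  show "monoid (endo_ring K S)"
    by (rule monoidI) (simp_all add: S cmp_closed[OF S S S] idm_closed cmp_assoc[OF S S S S] cmp_idm_left[OF S S] cmp_idm_right[OF S S])
qed (simp_all add: cmp_madd_left[OF S S S] cmp_madd_right[OF S S S])

lemma push_ezero: "ob C \<Longrightarrow> ob A \<Longrightarrow> ob A' \<Longrightarrow> a \<in> Hom K A A' \<Longrightarrow> push K a (ezero K C A) = ezero K C A'"
  using push_eadd[of C A A' a "ezero K C A" "ezero K C A"] ext_grp(1,5)[of C A] push_closed
    ab_grp_eq_zero[OF ext_ab_grp] by metis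

lemma pull_ezero: "ob C \<Longrightarrow> ob C' \<Longrightarrow> ob A \<Longrightarrow> c \<in> Hom K C' C \<Longrightarrow> pull K c (ezero K C A) = ezero K C' A"
  using pull_eadd[of C C' A c "ezero K C A" "ezero K C A"] ext_grp(1,5)[of C A] pull_closed
    ab_grp_eq_zero[OF ext_ab_grp] by metis

lemma push_mzero: "ob C \<Longrightarrow> ob A \<Longrightarrow> ob A' \<Longrightarrow> d \<in> Ext K C A \<Longrightarrow> push K (mzero K A A') d = ezero K C A'"
  using push_madd[of C A A' "mzero K A A'" "mzero K A A'" d] hom_grp(1,5)[of A A'] push_closed
    ab_grp_eq_zero[OF ext_ab_grp] by metis

lemma cmp_mzero_right: "ob A \<Longrightarrow> ob B \<Longrightarrow> ob C \<Longrightarrow> g \<in> Hom K B C \<Longrightarrow> cmp K g (mzero K A B) = mzero K A C"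
  using cmp_madd_left[of A B C "mzero K A B" "mzero K A B" g] hom_grp(1,5)[of A B] cmp_closed
    ab_grp_eq_zero[OF hom_ab_grp] by metis

lemma cmp_mzero_left: "ob A \<Longrightarrow> ob B \<Longrightarrow> ob C \<Longrightarrow> f \<in> Hom K A B \<Longrightarrow> cmp K (mzero K B C) f = mzero K A C"
  using cmp_madd_right[of A B C f "mzero K B C" "mzero K B C"] hom_grp(1,5)[of B C] cmp_closed
    ab_grp_eq_zero[OF hom_ab_grp] by metis

definition zero_ob :: 'o where "zero_ob = (SOME Z. is_zero_obj K Z)"

lemma zero_ob: "is_zero_obj K zero_ob"
  unfolding zero_ob_def using zero_obj_exists by (rule someI_ex)

lemma ob_zero_ob: "ob zero_ob"
  using zero_ob unfolding is_zero_obj_def by blast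

lemma hom_zero_ob: "ob A \<Longrightarrow> Hom K zero_ob A = {mzero K zero_ob A}" "ob A \<Longrightarrow> Hom K A zero_ob = {mzero K A zero_ob}"
  using zero_ob unfolding is_zero_obj_def by blast+

lemma biprod_zero_right:
  assumes A: "ob A"
  shows "is_biprod K A zero_ob A (idm K A) (mzero K zero_ob A) (idm K A) (mzero K A zero_ob)"
proof -
  have "cmp K (mzero K A zero_ob) (mzero K zero_ob A) = idm K zero_ob"
    using cmp_closed[OF ob_zero_ob A ob_zero_ob hom_grp(1)[OF ob_zero_ob A] hom_grp(1)[OF A ob_zero_ob]]
      idm_closed[OF ob_zero_ob] unfolding hom_zero_ob(1)[OF ob_zero_ob] by simp
  then show ?thesis unfolding is_biprod_def
    using A ob_zero_ob idm_closed[OF A] hom_grp(1,6)[OF A A] cmp_idm_left[OF A A] cmp_mzero_right[OF A ob_zero_ob A]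
      hom_grp(1)[OF ob_zero_ob A] hom_grp(1)[OF A ob_zero_ob] cmp_idm_right[OF A ob_zero_ob] cmp_idm_left[OF ob_zero_ob A]
    by simp
qed

lemma is_biprod_swap: "is_biprod K A B S i1 i2 p1 p2 \<Longrightarrow> is_biprod K B A S i2 i1 p2 p1"
  unfolding is_biprod_def using hom_grp(4) cmp_closed by auto

lemma biprod_zero_left:
  "ob A \<Longrightarrow> is_biprod K zero_ob A A (mzero K zero_ob A) (idm K A) (mzero K A zero_ob) (idm K A)"
  using is_biprod_swap[OF biprod_zero_right] .

lemma etri_ET3op:
  "etri K A B C x y d \<Longrightarrow> etri K A' B' C' x' y' d' \<Longrightarrow> b \<in> Hom K B B' \<Longrightarrow> c \<in> Hom K C C'
  \<Longrightarrow> cmp K c y = cmp K y' b \<Longrightarrow> \<exists>a\<in>Hom K A A'. cmp K x' a = cmp K b x \<and> push K a d = pull K c d'"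
  using et3op unfolding ET3op_def by blast

lemma etri_lift:
  assumes t: "etri K A B C x y d" and W: "ob W" and g: "g \<in> Hom K W C" and z: "pull K g d = ezero K W A"
  shows "\<exists>h\<in>Hom K W B. cmp K y h = g"
proof -
  have o: "ob A" "ob B" "ob C" using etri_typed[OF t] by auto
  have "push K (mzero K zero_ob A) (ezero K W zero_ob) = pull K g d"
    using push_ezero[OF W ob_zero_ob o(1) hom_grp(1)[OF ob_zero_ob o(1)]] z by simp
  from etri_morphism[OF etri_split[OF biprod_zero_left[OF W]] t hom_grp(1)[OF ob_zero_ob o(1)] g this]
  show ?thesis using cmp_idm_right[OF W o(3) g] by auto
qed

lemma etri_extend:
  assumes t: "etri K A B C x y d" and W: "ob W" and f: "f \<in> Hom K A W" and z: "push K f d = ezero K C W"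
  shows "\<exists>h\<in>Hom K B W. cmp K h x = f"
proof -
  have o: "ob A" "ob B" "ob C" using etri_typed[OF t] by auto
  have "push K f d = pull K (mzero K C zero_ob) (ezero K zero_ob W)"
    using pull_ezero[OF ob_zero_ob o(3) W hom_grp(1)[OF o(3) ob_zero_ob]] z by simp
  from etri_morphism[OF t etri_split[OF biprod_zero_right[OF W]] f hom_grp(1)[OF o(3) ob_zero_ob] this]
  show ?thesis using cmp_idm_left[OF o(1) W f] by auto
qed

lemma pull_deflation: assumes t: "etri K A B C x y d" shows "pull K y d = ezero K B A"
proof -
  have o: "ob A" "ob B" "ob C" "y \<in> Hom K B C" using etri_typed[OF t] by auto
  from etri_ET3op[OF etri_split[OF biprod_zero_left[OF o(2)]] t idm_closed[OF o(2)] o(4)]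
  obtain a where "a \<in> Hom K zero_ob A" "push K a (ezero K B zero_ob) = pull K y d"
    using cmp_idm_right[OF o(2,3,4)] cmp_idm_left[OF o(2,3,4)] by auto
  then show ?thesis using push_ezero[OF o(2) ob_zero_ob o(1)] by metis
qed

lemma etri_ET4op:
  assumes "etri K D A B f' f d" "etri K F B C g' g d'"
  shows "\<exists>E h h' dd e d''. E \<in> Ob K \<and> h \<in> Hom K A C \<and> h' \<in> Hom K E A \<and> dd \<in> Hom K D E \<and> e \<in> Hom K E F
           \<and> cmp K h' dd = f' \<and> cmp K f h' = cmp K g' e \<and> h = cmp K g f
           \<and> etri K E A C h' h d'' \<and> etri K D E F dd e (pull K g' d)
           \<and> d' = push K e d'' \<and> push K dd d = pull K g d''"
  using et4op assms unfolding ET4op_def by blast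

section \<open>Universal extensions and Wakamatsu's lemma\<close>

lemma projective_presentation_pushout:
  assumes t: "etri K A P C x p d" and P: "projective K P" and X: "ob X" and e: "\<epsilon> \<in> Ext K C X"
  shows "\<exists>g\<in>Hom K A X. push K g d = \<epsilon>"
proof -
  have o: "ob A" "ob P" "ob C" "p \<in> Hom K P C" using etri_typed[OF t] by auto
  obtain W u v where t2: "etri K X W C u v \<epsilon>" using etri_realizes[OF X o(3) e] by blast
  have "pull K p \<epsilon> = ezero K P X" using P X pull_closed[OF o(3) o(2) X o(4) e]
    unfolding projective_def by blast
  from etri_lift[OF t2 o(2) o(4) this] obtain h where h: "h \<in> Hom K P W" "cmp K v h = p" by blast
  then have "cmp K (idm K C) p = cmp K v h" using cmp_idm_left[OF o(2,3,4)] by simp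
  from etri_ET3op[OF t t2 h(1) idm_closed[OF o(3)] this] show ?thesis
    using pull_idm[OF o(3) X e] by auto
qed

definition universal_ext :: "'o set \<Rightarrow> 'o \<Rightarrow> 'o \<Rightarrow> 'e \<Rightarrow> bool" where
  "universal_ext XX C S \<delta> \<longleftrightarrow> \<delta> \<in> Ext K C S \<and> (\<forall>X\<in>XX. \<forall>\<epsilon>\<in>Ext K C X. \<exists>h\<in>Hom K S X. \<epsilon> = push K h \<delta>)"

definition left_minimal_ext :: "'o \<Rightarrow> 'e \<Rightarrow> bool" where
  "left_minimal_ext S \<delta> \<longleftrightarrow> (\<forall>\<phi>\<in>Hom K S S. push K \<phi> \<delta> = \<delta> \<longrightarrow> (\<exists>\<rho>\<in>Hom K S S. cmp K \<phi> \<rho> = idm K S))"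

lemma universal_ext_pushout_approx:
  assumes t: "etri K A P C x p d" and P: "projective K P" and XO: "XX \<subseteq> Ob K"
    and a: "left_approx K XX A X a"
  shows "universal_ext XX C X (push K a d)"
  unfolding universal_ext_def
proof (intro conjI ballI)
  have o: "ob A" "ob C" "d \<in> Ext K C A" using etri_typed[OF t] by auto
  have X: "ob X" "a \<in> Hom K A X" using a XO unfolding left_approx_def by auto
  show "push K a d \<in> Ext K C X" using push_closed[OF o(2,1) X o(3)] .
  fix X' \<epsilon> assume X': "X' \<in> XX" and e: "\<epsilon> \<in> Ext K C X'"
  have oX: "ob X'" using X' XO by auto
  obtain g where g: "g \<in> Hom K A X'" "push K g d = \<epsilon>"
    using projective_presentation_pushout[OF t P oX e] by blast
  obtain h where h: "h \<in> Hom K X X'" "cmp K h a = g" using a X' g(1) unfolding left_approx_def by blast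
  have "\<epsilon> = push K h (push K a d)" using push_cmp[OF o(2,1) X(1) oX X(2) h(1) o(3)] h(2) g(2) by simp
  then show "\<exists>h\<in>Hom K X X'. \<epsilon> = push K h (push K a d)" using h(1) by blast
qed

lemma universal_ext_factor:
  assumes u: "universal_ext XX C S \<delta>" and XO: "XX \<subseteq> Ob K" and o: "ob C" "ob S" "ob S'"
    and r: "r \<in> Hom K S' S" and d: "\<delta>' \<in> Ext K C S'" and eq: "\<delta> = push K r \<delta>'"
  shows "universal_ext XX C S' \<delta>'"
  unfolding universal_ext_def
proof (intro conjI d ballI)
  fix X \<epsilon> assume X: "X \<in> XX" and e: "\<epsilon> \<in> Ext K C X"
  have oX: "ob X" using X XO by auto
  obtain h where h: "h \<in> Hom K S X" "\<epsilon> = push K h \<delta>" using u X e unfolding universal_ext_def by blast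
  have "\<epsilon> = push K (cmp K h r) \<delta>'" using h eq push_cmp[OF o(1) o(3) o(2) oX r h(1) d] by simp
  then show "\<exists>h\<in>Hom K S' X. \<epsilon> = push K h \<delta>'" using cmp_closed[OF o(3) o(2) oX r h(1)] by blast
qed

text \<open>Wakamatsu's argument: given \<open>\<epsilon> \<in> \<EE>(Y, X')\<close>, (ET4)\<open>\<^sup>o\<^sup>p\<close> produces an extension of \<open>S\<close> by \<open>X'\<close> whose
  middle term \<open>E\<close> lies in \<open>XX\<close>; universality and minimality of \<open>\<delta>\<close> split \<open>E \<rightarrow> S\<close>, which kills \<open>x\<^sup>*\<epsilon>\<close>, and then \<open>\<epsilon>\<close>
  itself is a pullback of a pushout of \<open>\<delta>\<close> along the deflation of \<open>\<delta>\<close>, hence zero.\<close>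
lemma minimal_universal_ext_middle_orth:
  assumes ec: "ext_closed K XX" and XO: "XX \<subseteq> Ob K" and S: "S \<in> XX" and C: "ob C"
    and univ: "universal_ext XX C S \<delta>" and mini: "left_minimal_ext S \<delta>" and t: "etri K S Y C x y \<delta>"
    and X': "X' \<in> XX" and e: "\<epsilon> \<in> Ext K Y X'"
  shows "\<epsilon> = ezero K Y X'"
proof -
  have oS: "ob S" using S XO by auto
  have dl: "\<delta> \<in> Ext K C S" using univ unfolding universal_ext_def by blast
  have oY: "ob Y" and x: "x \<in> Hom K S Y" and y: "y \<in> Hom K Y C" using etri_typed[OF t] by auto
  have oX: "ob X'" using X' XO by auto
  obtain W u v where t2: "etri K X' W Y u v \<epsilon>" using etri_realizes[OF oX oY e] by blast
  from etri_ET4op[OF t2 t] obtain E h h' dd ee d'' where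
    E: "ob E" "dd \<in> Hom K X' E" "ee \<in> Hom K E S"
    "etri K E W C h' h d''" "etri K X' E S dd ee (pull K x \<epsilon>)"
    "\<delta> = push K ee d''" "push K dd \<epsilon> = pull K y d''" by blast
  have EX: "E \<in> XX" using ec E(5) X' S unfolding ext_closed_def by blast
  have d2: "d'' \<in> Ext K C E" using etri_typed[OF E(4)] by auto
  obtain k where k: "k \<in> Hom K S E" "d'' = push K k \<delta>" using univ EX d2 unfolding universal_ext_def by blast
  have "push K (cmp K ee k) \<delta> = push K ee (push K k \<delta>)"
    using push_cmp[OF C oS E(1) oS k(1) E(3) dl] .
  also have "\<dots> = \<delta>" using k(2) E(6) by (simp only:)
  finally have "push K (cmp K ee k) \<delta> = \<delta>" .
  then obtain \<rho> where r: "\<rho> \<in> Hom K S S" "cmp K (cmp K ee k) \<rho> = idm K S"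
    using mini cmp_closed[OF oS E(1) oS k(1) E(3)] unfolding left_minimal_ext_def by blast
  define s where "s = cmp K k \<rho>"
  have s: "s \<in> Hom K S E" unfolding s_def using cmp_closed[OF oS oS E(1) r(1) k(1)] .
  have es: "cmp K ee s = idm K S" unfolding s_def using r cmp_assoc[OF oS oS E(1) oS r(1) k(1) E(3)] by simp
  define \<theta> where "\<theta> = pull K x \<epsilon>"
  have th: "\<theta> \<in> Ext K S X'" unfolding \<theta>_def using pull_closed[OF oY oS oX x e] .
  have "pull K ee \<theta> = ezero K E X'" unfolding \<theta>_def using pull_deflation[OF E(5)] .
  then have "pull K s (pull K ee \<theta>) = ezero K S X'" using pull_ezero[OF E(1) oS oX s] by simp
  then have "\<theta> = ezero K S X'"
    using pull_cmp[OF oS E(1) oS oX E(3) s th] es pull_idm[OF oS oX th] by simp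
  then have "push K (idm K X') \<theta> = ezero K S X'" using push_idm[OF oS oX th] by simp
  from etri_extend[OF E(5)[folded \<theta>_def] oX idm_closed[OF oX] this] obtain r where
    rr: "r \<in> Hom K E X'" "cmp K r dd = idm K X'" by blast
  have "\<epsilon> = push K (cmp K r dd) \<epsilon>" using rr push_idm[OF oY oX e] by simp
  also have "\<dots> = push K r (push K dd \<epsilon>)" using push_cmp[OF oY oX E(1) oX E(2) rr(1) e] .
  also have "\<dots> = pull K y (push K r d'')" using E(7) push_pull[OF C oY E(1) oX rr(1) y d2] by simp
  finally have e1: "\<epsilon> = pull K y (push K r d'')" .
  have "push K r d'' \<in> Ext K C X'" using push_closed[OF C E(1) oX rr(1) d2] .
  then obtain t' where t': "t' \<in> Hom K S X'" "push K r d'' = push K t' \<delta>"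
    using univ X' unfolding universal_ext_def by blast
  have "pull K y (push K t' \<delta>) = push K t' (pull K y \<delta>)" using push_pull[OF C oY oS oX t'(1) y dl] by simp
  also have "\<dots> = ezero K Y X'" using pull_deflation[OF t] push_ezero[OF oY oS oX t'(1)] by simp
  finally show ?thesis using e1 t'(2) by simp
qed

lemma minimal_universal_ext_realization:
  assumes ec: "ext_closed K XX" and XO: "XX \<subseteq> Ob K" and S: "S \<in> XX" and C: "ob C"
    and univ: "universal_ext XX C S \<delta>" and mini: "left_minimal_ext S \<delta>"
  shows "\<exists>Y x y. Y \<in> perpL K XX \<and> etri K S Y C x y \<delta> \<and> right_approx K (perpL K XX) C Y y"
proof -
  have oS: "ob S" using S XO by auto
  have dl: "\<delta> \<in> Ext K C S" using univ unfolding universal_ext_def by blast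
  obtain Y x y where t: "etri K S Y C x y \<delta>" using etri_realizes[OF oS C dl] by blast
  have oY: "ob Y" and y: "y \<in> Hom K Y C" using etri_typed[OF t] by auto
  have "Ext K Y X' = {ezero K Y X'}" if "X' \<in> XX" for X'
    using minimal_universal_ext_middle_orth[OF ec XO S C univ mini t that] ext_grp(1)[OF oY] that XO by blast
  then have perp: "Y \<in> perpL K XX" unfolding perpL_def using oY by blast
  have "right_approx K (perpL K XX) C Y y"
    unfolding right_approx_def
  proof (intro conjI ballI perp y)
    fix Y' g assume Y': "Y' \<in> perpL K XX" and g: "g \<in> Hom K Y' C"
    have oY': "ob Y'" using Y' unfolding perpL_def by auto
    have "pull K g \<delta> = ezero K Y' S" using Y' S pull_closed[OF C oY' oS g dl] unfolding perpL_def by blast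
    from etri_lift[OF t oY' g this] show "\<exists>h\<in>Hom K Y' Y. cmp K y h = g" .
  qed
  then show ?thesis using perp t by blast
qed

end

section \<open>Krull--Schmidt decompositions\<close>

context extri_cat
begin

lemma retract_sandwich:
  assumes S: "ob S" and B: "ob B" and i: "\<iota> \<in> Hom K B S" and p: "\<pi> \<in> Hom K S B"
    and pi: "cmp K \<pi> \<iota> = idm K B" and c: "c \<in> Hom K B B" and h: "h \<in> Hom K B B"
  shows "cmp K (cmp K \<iota> (cmp K c \<pi>)) (cmp K \<iota> (cmp K h \<pi>)) = cmp K \<iota> (cmp K (cmp K c h) \<pi>)"
proof -
  have cp: "cmp K c \<pi> \<in> Hom K S B" and hp: "cmp K h \<pi> \<in> Hom K S B" using cmp_closed[OF S B B p] c h by auto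
  have X: "cmp K \<iota> (cmp K h \<pi>) \<in> Hom K S S" using cmp_closed[OF S B S hp i] .
  have "cmp K (cmp K \<iota> (cmp K c \<pi>)) (cmp K \<iota> (cmp K h \<pi>)) = cmp K \<iota> (cmp K (cmp K c \<pi>) (cmp K \<iota> (cmp K h \<pi>)))"
    using cmp_assoc[OF S S B S X cp i] by simp
  also have "cmp K (cmp K c \<pi>) (cmp K \<iota> (cmp K h \<pi>)) = cmp K c (cmp K \<pi> (cmp K \<iota> (cmp K h \<pi>)))"
    using cmp_assoc[OF S S B B X p c] by simp
  also have "cmp K \<pi> (cmp K \<iota> (cmp K h \<pi>)) = cmp K h \<pi>"
    using cmp_assoc[OF S B S B hp i p] pi cmp_idm_left[OF S B hp] by simp
  also have "cmp K c (cmp K h \<pi>) = cmp K (cmp K c h) \<pi>" using cmp_assoc[OF S B B B p h c] .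
  finally show ?thesis .
qed

definition splits_through :: "'o \<Rightarrow> 'm \<Rightarrow> 'o \<Rightarrow> 'm \<Rightarrow> 'm \<Rightarrow> bool" where
  "splits_through S f T i q \<longleftrightarrow> ob T \<and> i \<in> Hom K T S \<and> q \<in> Hom K S T \<and> cmp K q i = idm K T \<and> cmp K i q = f"

lemma splits_through_absorb:
  assumes S: "ob S" and sp: "splits_through S f T i q"
  shows "cmp K f i = i" "cmp K q f = q"
proof -
  have T: "ob T" and i: "i \<in> Hom K T S" and q: "q \<in> Hom K S T" and qi: "cmp K q i = idm K T"
    and f: "cmp K i q = f" using sp unfolding splits_through_def by auto
  show "cmp K f i = i" using cmp_assoc[OF T S T S i q i] qi f cmp_idm_right[OF T S i] by simp
  show "cmp K q f = q" using cmp_assoc[OF S T S T q i q] qi f cmp_idm_left[OF S T q] by simp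
qed

lemma splits_through_orth:
  assumes S: "ob S" and A: "ob A" and sp: "splits_through S f T i q"
  shows "g \<in> Hom K A S \<Longrightarrow> cmp K f g = mzero K A S \<Longrightarrow> cmp K q g = mzero K A T"
    and "g \<in> Hom K S A \<Longrightarrow> cmp K g f = mzero K S A \<Longrightarrow> cmp K g i = mzero K T A"
proof -
  have T: "ob T" and i: "i \<in> Hom K T S" and q: "q \<in> Hom K S T" and f: "cmp K i q = f"
    using sp unfolding splits_through_def by auto
  note qf = splits_through_absorb[OF S sp]
  show "cmp K q g = mzero K A T" if g: "g \<in> Hom K A S" and z: "cmp K f g = mzero K A S"
  proof -
    have "cmp K q g = cmp K (cmp K q f) g" using qf by simp
    also have "\<dots> = cmp K q (cmp K f g)"
      using cmp_assoc[OF A S S T g _ q] cmp_closed[OF S T S q i] f by simp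
    finally show ?thesis using z cmp_mzero_right[OF A S T q] by simp
  qed
  show "cmp K g i = mzero K T A" if g: "g \<in> Hom K S A" and z: "cmp K g f = mzero K S A"
  proof -
    have "cmp K g i = cmp K g (cmp K f i)" using qf by simp
    also have "\<dots> = cmp K (cmp K g f) i"
      using cmp_assoc[OF T S S A i _ g] cmp_closed[OF S T S q i] f by simp
    finally show ?thesis using z cmp_mzero_left[OF T S A i] by simp
  qed
qed

lemma cmp_sum_right:
  assumes o: "ob A" "ob M" "ob N1" "ob N2" "ob P"
    and x: "x \<in> Hom K A M" and b: "b \<in> Hom K M N1" and a: "a \<in> Hom K N1 P"
    and d: "d \<in> Hom K M N2" and c: "c \<in> Hom K N2 P"
  shows "cmp K (madd K (cmp K a b) (cmp K c d)) x = madd K (cmp K a (cmp K b x)) (cmp K c (cmp K d x))"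
  using cmp_madd_right[OF o(1,2,5) x cmp_closed[OF o(2,3,5) b a] cmp_closed[OF o(2,4,5) d c]]
    cmp_assoc[OF o(1,2,3,5) x b a] cmp_assoc[OF o(1,2,4,5) x d c] by simp

lemma cmp_sum_left:
  assumes o: "ob M" "ob N1" "ob N2" "ob P" "ob Q"
    and b: "b \<in> Hom K M N1" and a: "a \<in> Hom K N1 P"
    and d: "d \<in> Hom K M N2" and c: "c \<in> Hom K N2 P" and x: "x \<in> Hom K P Q"
  shows "cmp K x (madd K (cmp K a b) (cmp K c d)) = madd K (cmp K (cmp K x a) b) (cmp K (cmp K x c) d)"
  using cmp_madd_left[OF o(1,4,5) cmp_closed[OF o(1,2,4) b a] cmp_closed[OF o(1,3,4) d c] x]
    cmp_assoc[OF o(1,2,4,5) b a x] cmp_assoc[OF o(1,3,4,5) d c x] by simp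

lemma splits_through_add:
  assumes S: "ob S" and se: "splits_through S e B \<iota> \<pi>" and sf: "splits_through S f T' i' q'"
    and ef: "cmp K e f = mzero K S S" and fe: "cmp K f e = mzero K S S"
  shows "\<exists>T i q. splits_through S (madd K e f) T i q"
proof -
  have B: "ob B" "\<iota> \<in> Hom K B S" "\<pi> \<in> Hom K S B" "cmp K \<pi> \<iota> = idm K B" "cmp K \<iota> \<pi> = e"
    and T': "ob T'" "i' \<in> Hom K T' S" "q' \<in> Hom K S T'" "cmp K q' i' = idm K T'" "cmp K i' q' = f"
    using se sf unfolding splits_through_def by auto
  have eS: "e \<in> Hom K S S" and fS: "f \<in> Hom K S S" using B T' cmp_closed[OF S B(1) S] cmp_closed[OF S T'(1) S] by auto
  have "cmp K f \<iota> = cmp K (cmp K f e) \<iota>"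
    using splits_through_absorb(1)[OF S se] cmp_assoc[OF B(1) S S S B(2) eS fS] by simp
  then have "cmp K q' \<iota> = mzero K B T'"
    using splits_through_orth(1)[OF S B(1) sf B(2)] fe cmp_mzero_left[OF B(1) S S B(2)] by simp
  moreover have "cmp K \<pi> f = cmp K \<pi> (cmp K e f)"
    using splits_through_absorb(2)[OF S se] cmp_assoc[OF S S S B(1) fS eS B(3)] by simp
  then have "cmp K \<pi> i' = mzero K T' B"
    using splits_through_orth(2)[OF S B(1) sf B(3)] ef cmp_mzero_right[OF S S B(1) B(3)] by simp
  ultimately have q'i: "cmp K q' \<iota> = mzero K B T'" and pi': "cmp K \<pi> i' = mzero K T' B" .
  obtain T i1 i2 p1 p2 where bp: "is_biprod K T' B T i1 i2 p1 p2" using biprod_exists[OF T'(1) B(1)] by blast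
  have b: "ob T" "i1 \<in> Hom K T' T" "i2 \<in> Hom K B T" "p1 \<in> Hom K T T'" "p2 \<in> Hom K T B"
    "cmp K p1 i1 = idm K T'" "cmp K p2 i2 = idm K B" "cmp K p2 i1 = mzero K T' B" "cmp K p1 i2 = mzero K B T'"
    "madd K (cmp K i1 p1) (cmp K i2 p2) = idm K T" using bp unfolding is_biprod_def by auto
  define i where "i = madd K (cmp K i' p1) (cmp K \<iota> p2)"
  define q where "q = madd K (cmp K i1 q') (cmp K i2 \<pi>)"
  have i: "i \<in> Hom K T S" unfolding i_def using hom_grp(2)[OF b(1) S] cmp_closed[OF b(1) T'(1) S b(4) T'(2)]
    cmp_closed[OF b(1) B(1) S b(5) B(2)] by blast
  have q: "q \<in> Hom K S T" unfolding q_def using hom_grp(2)[OF S b(1)] cmp_closed[OF S T'(1) b(1) T'(3) b(2)]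
    cmp_closed[OF S B(1) b(1) B(3) b(3)] by blast
  have "cmp K q i' = madd K (cmp K i1 (idm K T')) (cmp K i2 (mzero K T' B))"
    unfolding q_def using cmp_sum_right[OF T'(1) S T'(1) B(1) b(1) T'(2) T'(3) b(2) B(3) b(3)] T'(4) pi' by simp
  then have qi': "cmp K q i' = i1"
    using cmp_idm_right[OF T'(1) b(1) b(2)] cmp_mzero_right[OF T'(1) B(1) b(1) b(3)] hom_grp(6)[OF T'(1) b(1) b(2)] by simp
  have "cmp K q \<iota> = madd K (cmp K i1 (mzero K B T')) (cmp K i2 (idm K B))"
    unfolding q_def using cmp_sum_right[OF B(1) S T'(1) B(1) b(1) B(2) T'(3) b(2) B(3) b(3)] B(4) q'i by simp
  then have q\<iota>: "cmp K q \<iota> = i2"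
    using cmp_idm_right[OF B(1) b(1) b(3)] cmp_mzero_right[OF B(1) T'(1) b(1) b(2)] hom_grp(5)[OF B(1) b(1) b(3)] by simp
  have qi: "cmp K q i = idm K T"
    unfolding i_def using cmp_sum_left[OF b(1) T'(1) B(1) S b(1) b(4) T'(2) b(5) B(2) q] qi' q\<iota> b(10) by simp
  have "cmp K i i1 = madd K (cmp K i' (idm K T')) (cmp K \<iota> (mzero K T' B))"
    unfolding i_def using cmp_sum_right[OF T'(1) b(1) T'(1) B(1) S b(2) b(4) T'(2) b(5) B(2)] b(6,8) by simp
  then have ii1: "cmp K i i1 = i'"
    using cmp_idm_right[OF T'(1) S T'(2)] cmp_mzero_right[OF T'(1) B(1) S B(2)] hom_grp(6)[OF T'(1) S T'(2)] by simp
  have "cmp K i i2 = madd K (cmp K i' (mzero K B T')) (cmp K \<iota> (idm K B))"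
    unfolding i_def using cmp_sum_right[OF B(1) b(1) T'(1) B(1) S b(3) b(4) T'(2) b(5) B(2)] b(7,9) by simp
  then have ii2: "cmp K i i2 = \<iota>"
    using cmp_idm_right[OF B(1) S B(2)] cmp_mzero_right[OF B(1) T'(1) S T'(2)] hom_grp(5)[OF B(1) S B(2)] by simp
  have "cmp K i q = madd K f e"
    unfolding q_def using cmp_sum_left[OF S T'(1) B(1) b(1) S T'(3) b(2) B(3) b(3) i] ii1 ii2 T'(5) B(5) by simp
  then have "splits_through S (madd K e f) T i q"
    unfolding splits_through_def using b(1) i q qi hom_grp(4)[OF S S eS fS] by simp
  then show ?thesis by blast
qed

lemma complementary_splittings_biprod:
  assumes S: "ob S" and sf: "splits_through S f T i q" and sf': "splits_through S f' T' i' q'"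
    and sum: "madd K f f' = idm K S" and ff': "cmp K f f' = mzero K S S" and f'f: "cmp K f' f = mzero K S S"
  shows "is_biprod K T T' S i i' q q'"
proof -
  have T: "ob T" "i \<in> Hom K T S" "q \<in> Hom K S T" "cmp K q i = idm K T" "cmp K i q = f"
    and T': "ob T'" "i' \<in> Hom K T' S" "q' \<in> Hom K S T'" "cmp K q' i' = idm K T'" "cmp K i' q' = f'"
    using sf sf' unfolding splits_through_def by auto
  have fS: "f \<in> Hom K S S" "f' \<in> Hom K S S" using T T' cmp_closed[OF S T(1) S] cmp_closed[OF S T'(1) S] by auto
  have "cmp K f' i = cmp K (cmp K f' f) i"
    using splits_through_absorb(1)[OF S sf] cmp_assoc[OF T(1) S S S T(2) fS] by simp
  then have q'i: "cmp K q' i = mzero K T T'"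
    using splits_through_orth(1)[OF S T(1) sf' T(2)] f'f cmp_mzero_left[OF T(1) S S T(2)] by simp
  have "cmp K f i' = cmp K (cmp K f f') i'"
    using splits_through_absorb(1)[OF S sf'] cmp_assoc[OF T'(1) S S S T'(2) fS(2,1)] by simp
  then have qi': "cmp K q i' = mzero K T' T"
    using splits_through_orth(1)[OF S T'(1) sf T'(2)] ff' cmp_mzero_left[OF T'(1) S S T'(2)] by simp
  show ?thesis unfolding is_biprod_def using S T T' q'i qi' sum by simp
qed

lemma dsum_decomp_splits:
  assumes "dsum_decomp K S n Bs incl prj" "j < n"
  shows "splits_through S (cmp K (incl j) (prj j)) (Bs j) (incl j) (prj j)"
  using assms unfolding dsum_decomp_def splits_through_def by auto

lemma push_eq_of_add_zero:
  assumes S: "ob S" and C: "ob C" and ab: "a \<in> Hom K S S" "b \<in> Hom K S S" and d: "d \<in> Ext K C S"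
    and sum: "madd K a b = c" and b0: "push K b d = ezero K C S"
  shows "push K a d = push K c d"
  using push_madd[OF C S S ab d] sum b0 ext_grp(6)[OF C S push_closed[OF C S S ab(1) d]] by simp

end

locale extri_obj = extri_cat K for K :: "('o, 'm, 'e) extri" +
  fixes S :: 'o
  assumes ob_S: "S \<in> Ob K"
begin

lemmas S = ob_S

sublocale E: ring "endo_ring K S"
  rewrites "carrier (endo_ring K S) = Hom K S S" and "mult (endo_ring K S) = cmp K"
    and "add (endo_ring K S) = madd K" and "one (endo_ring K S) = idm K S"
    and "zero (endo_ring K S) = mzero K S S"
  by (rule ring_endo_ring[OF ob_S]) simp_all

lemma retract_corner:
  assumes B: "ob B" and i: "\<iota> \<in> Hom K B S" and p: "\<pi> \<in> Hom K S B" and z: "z \<in> Hom K S S"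
  shows "cmp K (cmp K (cmp K \<iota> \<pi>) z) (cmp K \<iota> \<pi>) = cmp K \<iota> (cmp K (cmp K \<pi> (cmp K z \<iota>)) \<pi>)"
proof -
  have ip: "cmp K \<iota> \<pi> \<in> Hom K S S" using cmp_closed[OF S B S p i] .
  have zi: "cmp K z \<iota> \<in> Hom K B S" using cmp_closed[OF B S S i z] .
  have zip: "cmp K (cmp K z \<iota>) \<pi> \<in> Hom K S S" using cmp_closed[OF S B S p zi] .
  have "cmp K (cmp K (cmp K \<iota> \<pi>) z) (cmp K \<iota> \<pi>) = cmp K (cmp K \<iota> \<pi>) (cmp K z (cmp K \<iota> \<pi>))"
    using cmp_assoc[OF S S S S ip z ip] by simp
  also have "cmp K z (cmp K \<iota> \<pi>) = cmp K (cmp K z \<iota>) \<pi>" using cmp_assoc[OF S B S S p i z] .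
  also have "cmp K (cmp K \<iota> \<pi>) (cmp K (cmp K z \<iota>) \<pi>) = cmp K \<iota> (cmp K \<pi> (cmp K (cmp K z \<iota>) \<pi>))"
    using cmp_assoc[OF S S B S zip p i] by simp
  also have "cmp K \<pi> (cmp K (cmp K z \<iota>) \<pi>) = cmp K (cmp K \<pi> (cmp K z \<iota>)) \<pi>"
    using cmp_assoc[OF S B S B p zi p] .
  finally show ?thesis .
qed

lemma retract_corner_unit:
  assumes B: "ob B" and i: "\<iota> \<in> Hom K B S" and p: "\<pi> \<in> Hom K S B" and pi: "cmp K \<pi> \<iota> = idm K B"
    and c: "c \<in> Hom K B B" and iso: "Defs.iso K B B c"
  shows "E.corner_unit (cmp K \<iota> \<pi>) (cmp K \<iota> (cmp K c \<pi>))"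
proof -
  obtain h where h: "h \<in> Hom K B B" "cmp K h c = idm K B" "cmp K c h = idm K B"
    using iso unfolding Defs.iso_def by blast
  have emb: "cmp K \<iota> (cmp K a \<pi>) \<in> Hom K S S" if "a \<in> Hom K B B" for a
    using cmp_closed[OF S B S _ i] cmp_closed[OF S B B p that] by blast
  have "cmp K \<iota> \<pi> = cmp K \<iota> (cmp K (idm K B) \<pi>)" using cmp_idm_left[OF S B p] by simp
  then show ?thesis
    using E.corner_unitI[where w = "cmp K \<iota> (cmp K h \<pi>)"] emb retract_sandwich[OF S B i p pi] c h idm_closed[OF B]
      cmp_idm_left[OF B B] cmp_idm_right[OF B B] by simp
qed

text \<open>A retract \<open>B\<close> of \<open>S\<close> with local endomorphism ring gives a local idempotent of \<open>End(S)\<close>, because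
  \<open>c \<mapsto> \<iota> c \<pi>\<close> identifies \<open>End(B)\<close> with the corner ring at \<open>\<iota> \<pi>\<close>.\<close>
lemma retract_local_idem:
  assumes B: "ob B" and i: "\<iota> \<in> Hom K B S" and p: "\<pi> \<in> Hom K S B"
    and pi: "cmp K \<pi> \<iota> = idm K B" and L: "local_obj K B"
  shows "E.local_idem (cmp K \<iota> \<pi>)"
  unfolding E.local_idem_def
proof (intro conjI ballI)
  have one: "idm K B \<in> Hom K B B" using idm_closed[OF B] .
  have e: "cmp K \<iota> \<pi> = cmp K \<iota> (cmp K (idm K B) \<pi>)" using cmp_idm_left[OF S B p] by simp
  show ip: "cmp K \<iota> \<pi> \<in> Hom K S S" using cmp_closed[OF S B S p i] .
  show "cmp K (cmp K \<iota> \<pi>) (cmp K \<iota> \<pi>) = cmp K \<iota> \<pi>"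
    using e retract_sandwich[OF S B i p pi one one] cmp_idm_left[OF B B one] by simp
  have "cmp K (cmp K \<iota> \<pi>) \<iota> = \<iota>" using cmp_assoc[OF B S B S i p i] pi cmp_idm_right[OF B S i] by simp
  then have "cmp K \<pi> (cmp K (cmp K \<iota> \<pi>) \<iota>) \<noteq> mzero K B B" using pi L unfolding local_obj_def by simp
  then show "cmp K \<iota> \<pi> \<noteq> mzero K S S" using cmp_mzero_left[OF B S S i] cmp_mzero_right[OF B S B p] by auto
  fix z assume z: "z \<in> Hom K S S"
  define g where "g = cmp K \<pi> (cmp K z \<iota>)"
  have g: "g \<in> Hom K B B" unfolding g_def using cmp_closed[OF B S B _ p] cmp_closed[OF B S S i z] by blast
  note eze = retract_corner[OF B i p z, folded g_def]
  consider "Defs.iso K B B g" | "Defs.iso K B B (madd K (idm K B) (mneg K g))"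
    using L g unfolding local_obj_def by blast
  then show "E.corner_unit (cmp K \<iota> \<pi>) (cmp K (cmp K (cmp K \<iota> \<pi>) z) (cmp K \<iota> \<pi>)) \<or>
    E.corner_unit (cmp K \<iota> \<pi>) (cmp K \<iota> \<pi> \<ominus>\<^bsub>endo_ring K S\<^esub> cmp K (cmp K (cmp K \<iota> \<pi>) z) (cmp K \<iota> \<pi>))"
  proof cases
    case 1
    then show ?thesis using retract_corner_unit[OF B i p pi g] eze by simp
  next
    case 2
    define c where "c = madd K (idm K B) (mneg K g)"
    have c: "c \<in> Hom K B B" unfolding c_def using hom_grp(2,7)[OF B B] one g by blast
    have "madd K c g = idm K B"
      unfolding c_def using hom_grp(3,6,8)[OF B B] hom_grp(7)[OF B B g] one g by metis
    then have "cmp K \<iota> \<pi> = madd K (cmp K \<iota> (cmp K c \<pi>)) (cmp K \<iota> (cmp K g \<pi>))"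
      using e cmp_madd_right[OF S B B p c g] cmp_madd_left[OF S B S _ _ i] cmp_closed[OF S B B p] c g by simp
    then have "cmp K \<iota> \<pi> \<ominus>\<^bsub>endo_ring K S\<^esub> cmp K \<iota> (cmp K g \<pi>) = cmp K \<iota> (cmp K c \<pi>)"
      using E.eq_add_imp_minus cmp_closed[OF S B S _ i] cmp_closed[OF S B B p] c g by blast
    then show ?thesis using retract_corner_unit[OF B i p pi c 2[folded c_def]] eze by simp
  qed
qed

lemma dsum_decomp_orth_idems:
  assumes D: "dsum_decomp K S n Bs incl prj"
  shows "E.orth_idems (\<lambda>i. cmp K (incl i) (prj i)) [0..<n]"
    and "E.listsum (\<lambda>i. cmp K (incl i) (prj i)) [0..<n] = idm K S"
proof -
  have sp: "splits_through S (cmp K (incl j) (prj j)) (Bs j) (incl j) (prj j)" if "j < n" for j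
    using dsum_decomp_splits[OF D that] .
  have B: "ob (Bs j)" "incl j \<in> Hom K (Bs j) S" "prj j \<in> Hom K S (Bs j)" if "j < n" for j
    using sp[OF that] unfolding splits_through_def by auto
  have eS: "cmp K (incl j) (prj j) \<in> Hom K S S" if "j < n" for j using B[OF that] cmp_closed[OF S _ S] by blast
  have idem: "cmp K (cmp K (incl j) (prj j)) (cmp K (incl j) (prj j)) = cmp K (incl j) (prj j)" if j: "j < n" for j
    using splits_through_absorb(1)[OF S sp[OF j]] cmp_assoc[OF S B(1)[OF j] S S B(3,2)[OF j] eS[OF j]] by simp
  have orth: "cmp K (cmp K (incl j) (prj j)) (cmp K (incl k) (prj k)) = mzero K S S"
    if jk: "j < n" "k < n" "j \<noteq> k" for j k
  proof -
    have "cmp K (prj j) (incl k) = mzero K (Bs k) (Bs j)" using D jk unfolding dsum_decomp_def by auto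
    then have "cmp K (prj j) (cmp K (incl k) (prj k)) = mzero K S (Bs j)"
      using cmp_assoc[OF S B(1)[OF jk(2)] S B(1)[OF jk(1)] B(3,2)[OF jk(2)] B(3)[OF jk(1)]]
        cmp_mzero_left[OF S B(1)[OF jk(2)] B(1)[OF jk(1)] B(3)[OF jk(2)]] by simp
    then show ?thesis
      using cmp_assoc[OF S S B(1)[OF jk(1)] S eS[OF jk(2)] B(3,2)[OF jk(1)]]
        cmp_mzero_right[OF S B(1)[OF jk(1)] S B(2)[OF jk(1)]] by simp
  qed
  show "E.orth_idems (\<lambda>i. cmp K (incl i) (prj i)) [0..<n]"
    unfolding E.orth_idems_def using eS idem orth by simp
  show "E.listsum (\<lambda>i. cmp K (incl i) (prj i)) [0..<n] = idm K S"
    using D unfolding dsum_decomp_def msum_def E.listsum_def by simp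
qed

lemma dsum_decomp_local_idems:
  assumes D: "dsum_decomp K S n Bs incl prj" and L: "\<forall>i<n. local_obj K (Bs i)"
  shows "\<forall>j\<in>set [0..<n]. E.local_idem (cmp K (incl j) (prj j))"
  using retract_local_idem L D unfolding dsum_decomp_def by auto

lemma dsum_decomp_listsum_splits:
  assumes D: "dsum_decomp K S n Bs incl prj" and js: "distinct js" "set js \<subseteq> {..<n}"
  shows "\<exists>T i q. splits_through S (E.listsum (\<lambda>i. cmp K (incl i) (prj i)) js) T i q"
  using js
proof (induction js)
  case Nil
  have "cmp K (mzero K S zero_ob) (mzero K zero_ob S) = idm K zero_ob"
    using cmp_closed[OF ob_zero_ob S ob_zero_ob hom_grp(1)[OF ob_zero_ob S] hom_grp(1)[OF S ob_zero_ob]]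
      idm_closed[OF ob_zero_ob] unfolding hom_zero_ob(1)[OF ob_zero_ob] by simp
  then have "splits_through S (mzero K S S) zero_ob (mzero K zero_ob S) (mzero K S zero_ob)"
    unfolding splits_through_def using ob_zero_ob hom_grp(1)[OF ob_zero_ob S] hom_grp(1)[OF S ob_zero_ob]
      cmp_mzero_right[OF S ob_zero_ob S hom_grp(1)[OF ob_zero_ob S]] by simp
  then show ?case unfolding ring.listsum_Nil[OF ring_endo_ring[OF S]] by auto
next
  case (Cons j js)
  note O = dsum_decomp_orth_idems(1)[OF D]
  have j: "j < n" and js: "distinct js" "set js \<subseteq> {..<n}" using Cons.prems by auto
  obtain T i q where sp: "splits_through S (E.listsum (\<lambda>i. cmp K (incl i) (prj i)) js) T i q"
    using Cons.IH[OF js] by blast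
  have eS: "a < n \<Longrightarrow> cmp K (incl a) (prj a) \<in> Hom K S S"
    and eorth: "a < n \<Longrightarrow> b < n \<Longrightarrow> a \<noteq> b \<Longrightarrow> cmp K (cmp K (incl a) (prj a)) (cmp K (incl b) (prj b)) = mzero K S S"
    for a b using O unfolding E.orth_idems_def by auto
  have orth: "\<forall>k\<in>set js. cmp K (incl k) (prj k) \<in> Hom K S S
      \<and> cmp K (cmp K (incl j) (prj j)) (cmp K (incl k) (prj k)) = mzero K S S
      \<and> cmp K (cmp K (incl k) (prj k)) (cmp K (incl j) (prj j)) = mzero K S S"
  proof
    fix k assume "k \<in> set js"
    then have "k < n" "k \<noteq> j" using js Cons.prems(1) by auto
    then show "cmp K (incl k) (prj k) \<in> Hom K S S
      \<and> cmp K (cmp K (incl j) (prj j)) (cmp K (incl k) (prj k)) = mzero K S S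
      \<and> cmp K (cmp K (incl k) (prj k)) (cmp K (incl j) (prj j)) = mzero K S S"
      using eS eorth j by simp
  qed
  show ?case
    using splits_through_add[OF S dsum_decomp_splits[OF D j] sp] E.listsum_orth[of _ js] orth eS[OF j] by simp
qed

lemma push_listsum_zero:
  assumes C: "ob C" and d: "d \<in> Ext K C S"
    and z: "\<And>j. j \<in> set js \<Longrightarrow> e j \<in> Hom K S S \<and> push K (e j) d = ezero K C S"
  shows "push K (E.listsum e js) d = ezero K C S"
  using z
proof (induction js)
  case Nil
  show ?case using push_mzero[OF C S S d] by simp
next
  case (Cons j js)
  have "E.listsum e js \<in> Hom K S S" using E.listsum_closed[of js e] Cons.prems by simp
  then show ?case
    using push_eq_of_add_zero[OF S C _ _ d, of "E.listsum e js" "e j"] hom_grp(4)[OF S S] Cons by simp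
qed

text \<open>Pushing \<open>\<delta>\<close> along \<open>\<one> \<ominus> e\<close> removes its \<open>e\<close>-component; universality survives because \<open>\<delta>\<close> is
  recovered from the result by pushing along \<open>\<one> \<ominus> M \<otimes> x\<close>.\<close>
lemma universal_ext_remove_idem:
  assumes C: "ob C" and XO: "XX \<subseteq> Ob K" and u: "universal_ext XX C S \<delta>"
    and e: "e \<in> Hom K S S" "cmp K e e = e" and x: "x \<in> Hom K S S" "push K x \<delta> = ezero K C S"
    and M: "M \<in> Hom K S S" "cmp K (cmp K M x) e = e"
  shows "universal_ext XX C S (push K (idm K S \<ominus>\<^bsub>endo_ring K S\<^esub> e) \<delta>)"
proof -
  have d: "\<delta> \<in> Ext K C S" using u unfolding universal_ext_def by blast
  define Q where "Q = idm K S \<ominus>\<^bsub>endo_ring K S\<^esub> e"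
  define R where "R = idm K S \<ominus>\<^bsub>endo_ring K S\<^esub> cmp K M x"
  have Mx: "cmp K M x \<in> Hom K S S" using cmp_closed[OF S S S x(1) M(1)] .
  have QR: "Q \<in> Hom K S S" "R \<in> Hom K S S" unfolding Q_def R_def using e Mx by simp_all
  have RQ: "cmp K R Q = R"
    unfolding R_def Q_def using E.one_minus_mult_one_minus[OF Mx e(1) M(2)] .
  have "push K (cmp K M x) \<delta> = ezero K C S"
    using push_cmp[OF C S S S x(1) M(1) d] x(2) push_ezero[OF C S S M(1)] by simp
  moreover have "madd K R (cmp K M x) = idm K S" unfolding R_def using E.minus_add_cancel Mx by simp
  ultimately have "push K R \<delta> = \<delta>"
    using push_eq_of_add_zero[OF S C QR(2) Mx d] push_idm[OF C S d] by simp
  then have "\<delta> = push K R (push K Q \<delta>)" using push_cmp[OF C S S S QR(1,2) d] RQ by simp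
  then show ?thesis
    using universal_ext_factor[OF u XO C S S QR(2) push_closed[OF C S S QR(1) d]] unfolding Q_def by simp
qed

definition ext_support :: "(nat \<Rightarrow> 'm) \<Rightarrow> nat \<Rightarrow> 'o \<Rightarrow> 'e \<Rightarrow> nat set" where
  "ext_support e n C \<delta> = {i. i < n \<and> push K (e i) \<delta> \<noteq> ezero K C S}"

text \<open>Otherwise \<open>universal_ext_remove_idem\<close> would remove one more summand from the support.\<close>
lemma minimal_support_corner_radical:
  assumes D: "dsum_decomp K S n Bs incl prj" and L: "\<forall>i<n. local_obj K (Bs i)"
    and C: "ob C" and XO: "XX \<subseteq> Ob K" and u: "universal_ext XX C S \<delta>"
    and min: "\<And>\<delta>'. universal_ext XX C S \<delta>' \<Longrightarrow> card (ext_support e n C \<delta>) \<le> card (ext_support e n C \<delta>')"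
    and e: "e = (\<lambda>i. cmp K (incl i) (prj i))"
    and x: "x \<in> Hom K S S" "push K x \<delta> = ezero K C S" and l: "l \<in> ext_support e n C \<delta>"
  shows "E.corner_radical (e l) x"
proof (rule ccontr)
  assume "\<not> E.corner_radical (e l) x"
  then obtain y where y: "y \<in> Hom K S S" and cu: "E.corner_unit (e l) (cmp K (cmp K (cmp K (e l) y) x) (e l))"
    unfolding E.corner_radical_def by blast
  have ln: "l < n" using l unfolding ext_support_def by simp
  note O = dsum_decomp_orth_idems[OF D, folded e]
  have eS: "e i \<in> Hom K S S" "cmp K (e i) (e i) = e i" if "i < n" for i
    using O(1) that unfolding E.orth_idems_def by auto
  have eorth: "cmp K (e i) (e j) = mzero K S S" if "i < n" "j < n" "i \<noteq> j" for i j
    using O(1) that unfolding E.orth_idems_def by auto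
  obtain w where w: "w \<in> Hom K S S" "cmp K w (cmp K (cmp K (cmp K (e l) y) x) (e l)) = e l"
    using E.corner_unit_inverse[OF cu eS[OF ln]] by blast
  define M where "M = cmp K (cmp K w (e l)) y"
  have M: "M \<in> Hom K S S" unfolding M_def using w(1) eS(1)[OF ln] y by simp
  have "cmp K (cmp K M x) (e l) = e l" unfolding M_def using w eS(1)[OF ln] y x(1) by (simp add: E.m_assoc)
  then have u': "universal_ext XX C S (push K (idm K S \<ominus>\<^bsub>endo_ring K S\<^esub> e l) \<delta>)"
    using universal_ext_remove_idem[OF C XO u eS[OF ln] x M] by simp
  have d: "\<delta> \<in> Ext K C S" using u unfolding universal_ext_def by blast
  define Q where "Q = idm K S \<ominus>\<^bsub>endo_ring K S\<^esub> e l"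
  have Q: "Q \<in> Hom K S S" unfolding Q_def using eS[OF ln] by simp
  have "push K (e i) (push K Q \<delta>) = (if i = l then ezero K C S else push K (e i) \<delta>)" if i: "i < n" for i
  proof -
    have "cmp K (e i) Q = e i \<ominus>\<^bsub>endo_ring K S\<^esub> cmp K (e i) (e l)"
      unfolding Q_def using eS[OF i] eS[OF ln] by (simp add: E.minus_eq E.r_distr E.r_minus)
    then have "cmp K (e i) Q = (if i = l then mzero K S S else e i)"
      using eorth[OF i ln] eS[OF ln] eS[OF i] by (auto simp: E.r_neg E.minus_eq)
    then show ?thesis
      using push_cmp[OF C S S S Q eS(1)[OF i] d] push_mzero[OF C S S d] by auto
  qed
  then have "ext_support e n C (push K Q \<delta>) = ext_support e n C \<delta> - {l}"
    unfolding ext_support_def by (auto split: if_splits)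
  then have "card (ext_support e n C (push K Q \<delta>)) < card (ext_support e n C \<delta>)"
    using card_Diff1_less[OF _ l] by (simp add: ext_support_def)
  then show False using min[OF u'[folded Q_def]] by simp
qed

lemma splits_through_split_epi:
  assumes sp: "splits_through S f T i q" and \<phi>: "\<phi> \<in> Hom K T T" and g: "g \<in> Hom K S S"
    and fg: "cmp K (cmp K i (cmp K \<phi> q)) g = f"
  shows "\<exists>\<rho>\<in>Hom K T T. cmp K \<phi> \<rho> = idm K T"
proof
  have T: "ob T" "i \<in> Hom K T S" "q \<in> Hom K S T" "cmp K q i = idm K T"
    using sp unfolding splits_through_def by auto
  have \<phi>q: "cmp K \<phi> q \<in> Hom K S T" using cmp_closed[OF S T(1) T(1) T(3) \<phi>] .
  have gi: "cmp K g i \<in> Hom K T S" using cmp_closed[OF T(1) S S T(2) g] .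
  show "cmp K q (cmp K g i) \<in> Hom K T T" using cmp_closed[OF T(1) S T(1) gi T(3)] .
  have "cmp K q (cmp K i (cmp K \<phi> q)) = cmp K \<phi> q"
    using cmp_assoc[OF S T(1) S T(1) \<phi>q T(2,3)] T(4) cmp_idm_left[OF S T(1) \<phi>q] by simp
  then have "cmp K \<phi> (cmp K q (cmp K g i)) = cmp K q (cmp K (cmp K (cmp K i (cmp K \<phi> q)) g) i)"
    using cmp_assoc[OF T(1) S T(1) T(1) gi T(3) \<phi>] cmp_assoc[OF T(1) S S T(1) gi _ T(3)]
      cmp_assoc[OF T(1) S S S T(2) g] cmp_closed[OF S T(1) S \<phi>q T(2)] by simp
  then show "cmp K \<phi> (cmp K q (cmp K g i)) = idm K T"
    using fg splits_through_absorb(1)[OF S sp] T(4) by simp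
qed

text \<open>If \<open>\<phi>\<close> fixes the restriction of \<open>\<delta>\<close> to the support summand \<open>T\<close>, then \<open>x = f \<ominus> i \<phi> q\<close> kills \<open>\<delta>\<close>, so it is
  radical at the support and \<open>f \<ominus> x = i \<phi> q\<close> is right invertible in the corner at \<open>f\<close>.\<close>
lemma minimal_support_left_minimal:
  assumes D: "dsum_decomp K S n Bs incl prj" and L: "\<forall>i<n. local_obj K (Bs i)"
    and C: "ob C" and XO: "XX \<subseteq> Ob K" and u: "universal_ext XX C S \<delta>"
    and min: "\<And>\<delta>'. universal_ext XX C S \<delta>' \<Longrightarrow> card (ext_support e n C \<delta>) \<le> card (ext_support e n C \<delta>')"
    and e: "e = (\<lambda>i. cmp K (incl i) (prj i))"
    and js: "js = filter (\<lambda>i. i \<in> ext_support e n C \<delta>) [0..<n]"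
    and sp: "splits_through S (E.listsum e js) T i q" and pf: "push K (E.listsum e js) \<delta> = \<delta>"
  shows "left_minimal_ext T (push K q \<delta>)"
  unfolding left_minimal_ext_def
proof (intro ballI impI)
  fix \<phi> assume \<phi>: "\<phi> \<in> Hom K T T" and fix\<phi>: "push K \<phi> (push K q \<delta>) = push K q \<delta>"
  define f where "f = E.listsum e js"
  have T: "ob T" "i \<in> Hom K T S" "q \<in> Hom K S T" "cmp K q i = idm K T" "cmp K i q = f"
    using sp unfolding splits_through_def f_def by auto
  have d: "\<delta> \<in> Ext K C S" using u unfolding universal_ext_def by blast
  note O = dsum_decomp_orth_idems[OF D, folded e]
  have Ojs: "E.orth_idems e js" by (rule E.orth_idems_sublist[OF O(1)]) (auto simp: js)
  have f: "f \<in> Hom K S S" "cmp K f f = f"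
    using E.listsum_idem[OF Ojs] cmp_closed[OF S T(1) S T(3,2)] T(5) unfolding f_def by auto
  define y where "y = cmp K i (cmp K \<phi> q)"
  define x where "x = f \<ominus>\<^bsub>endo_ring K S\<^esub> y"
  have \<phi>q: "cmp K \<phi> q \<in> Hom K S T" using cmp_closed[OF S T(1) T(1) T(3) \<phi>] .
  have yS: "y \<in> Hom K S S" unfolding y_def using cmp_closed[OF S T(1) S \<phi>q T(2)] .
  have xS: "x \<in> Hom K S S" unfolding x_def using f yS by simp
  have fy: "cmp K f y = y" unfolding y_def
    using splits_through_absorb(1)[OF S sp[folded f_def]] cmp_assoc[OF S T(1) S S \<phi>q T(2) f(1)] by simp
  have yf: "cmp K y f = y" unfolding y_def
    using splits_through_absorb(2)[OF S sp[folded f_def]] cmp_assoc[OF S S T(1) T(1) f(1) T(3) \<phi>]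
      cmp_assoc[OF S S T(1) S f(1) \<phi>q T(2)] by simp
  have "push K y \<delta> = push K i (push K \<phi> (push K q \<delta>))"
    unfolding y_def using push_cmp[OF C S T(1) S \<phi>q T(2) d] push_cmp[OF C S T(1) T(1) T(3) \<phi> d] by simp
  also have "\<dots> = \<delta>" using fix\<phi> push_cmp[OF C S T(1) S T(3,2) d] T(5) pf unfolding f_def by simp
  finally have py: "push K y \<delta> = \<delta>" .
  have xy: "madd K x y = f" unfolding x_def using E.minus_add_cancel f(1) yS by simp
  have px: "push K x \<delta> = ezero K C S"
    using push_madd[OF C S S xS yS d] xy py pf[folded f_def]
      ab_grp_eq_zero[OF ext_ab_grp[OF C S] push_closed[OF C S S xS d] d] by simp
  have fxf: "cmp K (cmp K f x) f = x"
    unfolding x_def using f yS fy yf by (simp add: E.minus_eq E.r_distr E.l_distr E.r_minus E.l_minus E.m_assoc)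
  have rad: "\<forall>l\<in>set js. E.corner_radical (e l) x"
    using minimal_support_corner_radical[OF D L C XO u min e xS px] unfolding js by simp
  have loc: "\<forall>j\<in>set js. E.local_idem (e j)" using dsum_decomp_local_idems[OF D L] unfolding js e by simp
  obtain g where g: "g \<in> Hom K S S" "g = madd K f (cmp K x g)" "cmp K g f = g"
    using E.radical_right_quasi_inverse[OF Ojs loc xS _ rad] fxf unfolding f_def by auto
  have "cmp K y g = f"
    using E.quasi_inverse_complement[OF f xS E.corner_absorb(1)[OF f xS fxf] yS xy g(1,2)] .
  then show "\<exists>\<rho>\<in>Hom K T T. cmp K \<phi> \<rho> = idm K T"
    using splits_through_split_epi[OF sp[folded f_def] \<phi> g(1)] unfolding y_def by blast
qed

lemma krull_schmidt_minimal_universal_ext: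
  assumes D: "dsum_decomp K S n Bs incl prj" and L: "\<forall>i<n. local_obj K (Bs i)"
    and XO: "XX \<subseteq> Ob K" and sc: "summand_closed K XX" and SX: "S \<in> XX"
    and C: "ob C" and u0: "universal_ext XX C S \<delta>\<^sub>0"
  shows "\<exists>T \<delta>'. T \<in> XX \<and> universal_ext XX C T \<delta>' \<and> left_minimal_ext T \<delta>'"
proof -
  define e where "e = (\<lambda>i. cmp K (incl i) (prj i))"
  obtain \<delta> where u: "universal_ext XX C S \<delta>"
    and min: "\<And>\<delta>'. universal_ext XX C S \<delta>' \<Longrightarrow> card (ext_support e n C \<delta>) \<le> card (ext_support e n C \<delta>')"
    using ex_has_least_nat[of "universal_ext XX C S" \<delta>\<^sub>0 "\<lambda>\<delta>. card (ext_support e n C \<delta>)"] u0 by blast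
  have d: "\<delta> \<in> Ext K C S" using u unfolding universal_ext_def by blast
  define js where "js = filter (\<lambda>i. i \<in> ext_support e n C \<delta>) [0..<n]"
  define js' where "js' = filter (\<lambda>i. i \<notin> ext_support e n C \<delta>) [0..<n]"
  note O = dsum_decomp_orth_idems[OF D, folded e_def]
  have eS: "e j \<in> Hom K S S" if "j < n" for j using O(1) that unfolding E.orth_idems_def by auto
  have eorth: "cmp K (e j) (e k) = mzero K S S" if "j < n" "k < n" "j \<noteq> k" for j k
    using O(1) that unfolding E.orth_idems_def by auto
  define f where "f = E.listsum e js"
  define f' where "f' = E.listsum e js'"
  have fS: "f \<in> Hom K S S" "f' \<in> Hom K S S"
    unfolding f_def f'_def js_def js'_def by (auto intro!: E.listsum_closed eS)
  have ff': "madd K f f' = idm K S"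
    using E.listsum_filter[of "[0..<n]" e "\<lambda>i. i \<in> ext_support e n C \<delta>"] O(2) eS
    unfolding f_def f'_def js_def js'_def by simp
  have "push K f' \<delta> = ezero K C S"
    unfolding f'_def js'_def by (rule push_listsum_zero[OF C d]) (auto simp: eS ext_support_def)
  then have pf: "push K f \<delta> = \<delta>" using push_eq_of_add_zero[OF S C fS d ff'] push_idm[OF C S d] by simp
  have orth: "cmp K f f' = mzero K S S" "cmp K f' f = mzero K S S"
    unfolding f_def f'_def js_def js'_def
    by (rule E.listsum_mult_listsum_zero; auto simp: eS intro!: eorth)+
  have "\<exists>T i q. splits_through S f T i q" "\<exists>T' i' q'. splits_through S f' T' i' q'"
    unfolding f_def f'_def e_def js_def js'_def by (rule dsum_decomp_listsum_splits[OF D]; auto)+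
  then obtain T i q T' i' q' where sp: "splits_through S f T i q" and sp': "splits_through S f' T' i' q'"
    by blast
  have T: "ob T" "i \<in> Hom K T S" "q \<in> Hom K S T" "cmp K i q = f" using sp unfolding splits_through_def by auto
  have "T \<in> XX" using complementary_splittings_biprod[OF S sp sp' ff' orth] sc SX
    unfolding summand_closed_def by blast
  moreover have "universal_ext XX C T (push K q \<delta>)"
    using universal_ext_factor[OF u XO C S T(1) T(2) push_closed[OF C S T(1) T(3) d]]
      push_cmp[OF C S T(1) S T(3,2) d] T(4) pf by simp
  moreover have "left_minimal_ext T (push K q \<delta>)"
    using minimal_support_left_minimal[OF D L C XO u min e_def js_def sp[unfolded f_def] pf[unfolded f_def]] .
  ultimately show ?thesis by blast
qed

end

section \<open>The approximation triangles\<close>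

context extri_cat
begin

lemma approximation_triangle:
  assumes KS: "krull_schmidt K" and EP: "enough_proj K"
    and XX: "subcat K XX" "cov_finite K XX" "ext_closed K XX" "summand_closed K XX" and C: "ob C"
  shows "\<exists>X Y x y d. X \<in> XX \<and> Y \<in> perpL K XX \<and> etri K X Y C x y d \<and> right_approx K (perpL K XX) C Y y"
proof -
  have XO: "XX \<subseteq> Ob K" using XX(1) unfolding subcat_def by blast
  obtain A P x p d where t: "etri K A P C x p d" and P: "projective K P"
    using EP C unfolding enough_proj_def by blast
  obtain S a where a: "left_approx K XX A S a"
    using XX(2) etri_typed[OF t] unfolding cov_finite_def by blast
  have SX: "S \<in> XX" using a unfolding left_approx_def by blast
  then obtain n Bs incl prj where D: "dsum_decomp K S n Bs incl prj" and L: "\<forall>i<n. local_obj K (Bs i)"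
    using KS XO unfolding krull_schmidt_def by blast
  interpret extri_obj K S using SX XO by unfold_locales blast
  obtain T \<delta> where "T \<in> XX" "universal_ext XX C T \<delta>" "left_minimal_ext T \<delta>"
    using krull_schmidt_minimal_universal_ext[OF D L XO XX(4) SX C universal_ext_pushout_approx[OF t P XO a]]
    by blast
  then show ?thesis using minimal_universal_ext_realization[OF XX(3) XO _ C] by blast
qed

end

section \<open>Duality\<close>

definition op_extri :: "('o, 'm, 'e) extri \<Rightarrow> ('o, 'm, 'e) extri" where
  "op_extri K = K\<lparr>Hom := (\<lambda>A B. Hom K B A), cmp := (\<lambda>g f. cmp K f g), mzero := (\<lambda>A B. mzero K B A),
     Ext := (\<lambda>C A. Ext K A C), ezero := (\<lambda>C A. ezero K A C), push := pull K, pull := push K,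
     etri := (\<lambda>A B C x y d. etri K C B A y x d)\<rparr>"

lemma op_extri_simps [simp]:
  "Ob (op_extri K) = Ob K" "Hom (op_extri K) A B = Hom K B A" "cmp (op_extri K) g f = cmp K f g"
  "idm (op_extri K) = idm K" "madd (op_extri K) = madd K" "mzero (op_extri K) A B = mzero K B A"
  "mneg (op_extri K) = mneg K" "Ext (op_extri K) C A = Ext K A C" "eadd (op_extri K) = eadd K"
  "ezero (op_extri K) C A = ezero K A C" "eneg (op_extri K) = eneg K"
  "push (op_extri K) = pull K" "pull (op_extri K) = push K"
  "etri (op_extri K) A B C x y d = etri K C B A y x d"
  unfolding op_extri_def by simp_all

lemma extri_cat_of_extriangulated:
  assumes "extriangulated K" shows "extri_cat K"
proof -
  have a: "additive K" "biadditive_E K" "realization K" "ET3op K" "ET4op K"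
    using assms unfolding extriangulated_def by auto
  show ?thesis
    by unfold_locales (use a in \<open>auto simp: additive_def realization_def\<close>)
qed

lemma is_biprod_op: "is_biprod (op_extri K) A B S i1 i2 p1 p2 \<longleftrightarrow> is_biprod K A B S p1 p2 i1 i2"
  unfolding is_biprod_def by auto

lemma extri_cat_op:
  assumes E: "extriangulated K" shows "extri_cat (op_extri K)"
proof -
  interpret extri_cat K using extri_cat_of_extriangulated[OF E] .
  have et: "ET3 K" "ET4 K" using E unfolding extriangulated_def by auto
  show ?thesis
  proof
    show "preadditive (op_extri K)"
      unfolding preadditive_def op_extri_simps
      by (intro conjI ballI; (rule cmp_closed idm_closed cmp_idm_right cmp_idm_left hom_ab_grp
        cmp_madd_right cmp_madd_left cmp_assoc[symmetric] conjI; assumption)?)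
    show "\<exists>Z. is_zero_obj (op_extri K) Z" using zero_obj_exists unfolding is_zero_obj_def by auto
    show "\<exists>S i1 i2 p1 p2. is_biprod (op_extri K) A B S i1 i2 p1 p2" if "A \<in> Ob (op_extri K)" "B \<in> Ob (op_extri K)" for A B
      using biprod_exists that unfolding is_biprod_op by simp blast
    show "biadditive_E (op_extri K)"
      unfolding biadditive_E_def op_extri_simps
      by (intro conjI ballI; (rule ext_ab_grp pull_closed push_closed pull_idm push_idm pull_cmp push_cmp
        push_pull[symmetric] pull_eadd pull_madd push_eadd push_madd conjI; assumption)?)
    show "ET3op (op_extri K)"
      unfolding ET3op_def op_extri_simps
    proof (intro allI impI)
      fix A B C x y d A' B' C' x' y' d' b c
      assume "etri K C B A y x d" "etri K C' B' A' y' x' d'" "b \<in> Hom K B' B" "c \<in> Hom K C' C"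
        "cmp K y c = cmp K b y'"
      from et(1)[unfolded ET3_def, rule_format, OF this(2,1,4,3) this(5)[symmetric]]
      show "\<exists>a\<in>Hom K A' A. cmp K a x' = cmp K x b \<and> pull K a d = push K c d'" by auto
    qed
    show "ET4op (op_extri K)"
      unfolding ET4op_def op_extri_simps
    proof (intro allI impI)
      fix A B C D F f f' g g' d d'
      assume "etri K B A D f f' d" "etri K C B F g g' d'"
      from et(2)[unfolded ET4_def, rule_format, OF this(2,1)] obtain E h h' dd e d'' where
        r: "E \<in> Ob K" "h \<in> Hom K C A" "h' \<in> Hom K A E" "dd \<in> Hom K F E" "e \<in> Hom K E D"
           "h = cmp K f g" "cmp K h' f = cmp K dd g'" "cmp K e h' = f'"
           "etri K C A E h h' d''" "etri K F E D dd e (push K g' d)"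
           "pull K dd d'' = d'" "push K g d'' = pull K e d" by blast
      show "\<exists>E h h' dd e d''. E \<in> Ob K \<and> h \<in> Hom K C A \<and> h' \<in> Hom K A E \<and> dd \<in> Hom K E D
           \<and> e \<in> Hom K F E \<and> cmp K dd h' = f' \<and> cmp K h' f = cmp K e g' \<and> h = cmp K f g
           \<and> etri K C A E h h' d'' \<and> etri K F E D e dd (push K g' d) \<and> d' = pull K e d''
           \<and> pull K dd d = push K g d''"
        by (rule exI[of _ E], rule exI[of _ h], rule exI[of _ h'], rule exI[of _ e], rule exI[of _ dd],
            rule exI[of _ d'']) (use r in simp)
    qed
    show "\<exists>B x y. etri (op_extri K) A B C x y d"
      if "A \<in> Ob (op_extri K)" "C \<in> Ob (op_extri K)" "d \<in> Ext (op_extri K) C A" for A C d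
      using etri_realizes[of C A d] that by auto
    show "\<exists>b\<in>Hom (op_extri K) B B'. cmp (op_extri K) b x = cmp (op_extri K) x' a
        \<and> cmp (op_extri K) y' b = cmp (op_extri K) c y"
      if "etri (op_extri K) A B C x y d" "etri (op_extri K) A' B' C' x' y' d'" "a \<in> Hom (op_extri K) A A'"
        "c \<in> Hom (op_extri K) C C'" "push (op_extri K) a d = pull (op_extri K) c d'"
      for A B C x y d A' B' C' x' y' d' a c
      using etri_morphism[of C' B' A' y' x' d' C B A y x d c a] that by auto
  qed (use etri_typed etri_split[OF is_biprod_swap] in \<open>auto simp: is_biprod_op\<close>)
qed

lemma subcat_op:
  assumes XX: "subcat K XX" shows "subcat (op_extri K) XX"
  unfolding subcat_def
proof (intro conjI allI impI)
  show "XX \<subseteq> Ob (op_extri K)" using XX unfolding subcat_def by simp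
  fix A B f assume A: "A \<in> XX" and iso: "Defs.iso (op_extri K) A B f"
  obtain g where "Defs.iso K A B g" using iso unfolding Defs.iso_def by auto
  then show "B \<in> XX" using XX A unfolding subcat_def by blast
next
  fix Z assume "is_zero_obj (op_extri K) Z"
  then have "is_zero_obj K Z" unfolding is_zero_obj_def by auto
  then show "Z \<in> XX" using XX unfolding subcat_def by blast
next
  fix A B T i1 i2 p1 p2 assume "A \<in> XX" "B \<in> XX" "is_biprod (op_extri K) A B T i1 i2 p1 p2"
  then show "T \<in> XX" using XX unfolding subcat_def is_biprod_op by blast
qed

lemma cov_finite_op: "contra_finite K XX \<Longrightarrow> cov_finite (op_extri K) XX"
  unfolding contra_finite_def cov_finite_def left_approx_def right_approx_def by simp

lemma ext_closed_op: "ext_closed K XX \<Longrightarrow> ext_closed (op_extri K) XX"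
  unfolding ext_closed_def by simp blast

lemma summand_closed_op: "summand_closed K XX \<Longrightarrow> summand_closed (op_extri K) XX"
  unfolding summand_closed_def is_biprod_op by blast

lemma perpL_op: "perpL (op_extri K) XX = perpR K XX"
  unfolding perpL_def perpR_def by simp

lemma right_approx_op: "right_approx (op_extri K) XX C Y y \<longleftrightarrow> left_approx K XX C Y y"
  unfolding right_approx_def left_approx_def by simp

lemma krull_schmidt_op:
  assumes "krull_schmidt K" shows "krull_schmidt (op_extri K)"
  unfolding krull_schmidt_def
proof
  fix A assume "A \<in> Ob (op_extri K)"
  then obtain n Bs incl prj where D: "dsum_decomp K A n Bs incl prj" and L: "\<forall>i<n. local_obj K (Bs i)"
    using assms unfolding krull_schmidt_def by auto
  have "dsum_decomp (op_extri K) A n Bs prj incl"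
    using D unfolding dsum_decomp_def msum_def by auto
  moreover have "Defs.iso (op_extri K) B B f \<longleftrightarrow> Defs.iso K B B f" for B f
    unfolding Defs.iso_def by auto
  then have "\<forall>i<n. local_obj (op_extri K) (Bs i)" using L unfolding local_obj_def by simp
  ultimately show "\<exists>n Bs incl prj. dsum_decomp (op_extri K) A n Bs incl prj \<and> (\<forall>i<n. local_obj (op_extri K) (Bs i))"
    by blast
qed

lemma enough_proj_op: "enough_inj K \<Longrightarrow> enough_proj (op_extri K)"
  unfolding enough_inj_def enough_proj_def injective_def projective_def by simp blast

theorem corollary3p3:
  fixes K :: "('o, 'm, 'e) extri"
  assumes "extriangulated K" and "krull_schmidt K" and "enough_proj K" and "enough_inj K"
  shows "(\<forall>\<X>. subcat K \<X> \<and> cov_finite K \<X> \<and> ext_closed K \<X> \<and> summand_closed K \<X> \<longrightarrow>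
            (\<forall>C\<in>Ob K. \<exists>X Y x y d. X \<in> \<X> \<and> Y \<in> perpL K \<X> \<and> etri K X Y C x y d
                \<and> right_approx K (perpL K \<X>) C Y y))
       \<and> (\<forall>\<Y>. subcat K \<Y> \<and> contra_finite K \<Y> \<and> ext_closed K \<Y> \<and> summand_closed K \<Y> \<longrightarrow>
            (\<forall>C\<in>Ob K. \<exists>X Y x y d. X \<in> perpR K \<Y> \<and> Y \<in> \<Y> \<and> etri K C X Y x y d
                \<and> left_approx K (perpR K \<Y>) C X x))"
proof (intro conjI allI impI ballI)
  interpret extri_cat K using extri_cat_of_extriangulated[OF assms(1)] .
  fix XX C assume "subcat K XX \<and> cov_finite K XX \<and> ext_closed K XX \<and> summand_closed K XX" and "C \<in> Ob K"
  then show "\<exists>X Y x y d. X \<in> XX \<and> Y \<in> perpL K XX \<and> etri K X Y C x y d \<and> right_approx K (perpL K XX) C Y y"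
    using approximation_triangle[OF assms(2,3)] by blast
next
  interpret op: extri_cat "op_extri K" using extri_cat_op[OF assms(1)] .
  fix YY C assume YY: "subcat K YY \<and> contra_finite K YY \<and> ext_closed K YY \<and> summand_closed K YY"
    and C: "C \<in> Ob K"
  have "\<exists>X Y x y d. X \<in> YY \<and> Y \<in> perpL (op_extri K) YY \<and> etri (op_extri K) X Y C x y d
      \<and> right_approx (op_extri K) (perpL (op_extri K) YY) C Y y"
    using op.approximation_triangle[OF krull_schmidt_op[OF assms(2)] enough_proj_op[OF assms(4)]
        subcat_op cov_finite_op ext_closed_op summand_closed_op] YY C by simp
  then show "\<exists>X Y x y d. X \<in> perpR K YY \<and> Y \<in> YY \<and> etri K C X Y x y d \<and> left_approx K (perpR K YY) C X x"
    unfolding perpL_op right_approx_op op_extri_simps by blast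
qed

end
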